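(* Let $c \geq 1$ be an integer. For each integer $p \geq 3$ there is an infinite sequence of CNFs $F_1,F_2,\dots$, each of whose primal graphs has treewidth at most $p$, such that for each $F_i$, every $c$-NSOBDD computing $F_i$ has size at least $\left(\frac{m}{3p^2}\right)^{p/(8c-4)}$, where $m$ is the number of variables of $F_i$. In particular, for $c=1$ and every fixed $p$ this size is $\Omega(m^{p/4})$.
   Context: The primal graph of a CNF has the variables as vertices, two being adjacent iff they occur together in some clause. A non-deterministic branching program is a directed acyclic graph with one root and one leaf, some of whose edges are labelled by literals of variables. A path is consistent if it does not contain two edges labelled by opposite literals of the same variable; a consistent root-leaf path is a computational path. The program computes $F$: an assignment $S$ (as a set of literals) satisfies $F$ iff some computational path has all its labels in $S$. A $c$-NSOBDD is such a program for which there is a permutation $SV$ of its variables such that every computational path $P$ can be written as $P=P_1+\dots+P_c$ (concatenation of subpaths) where on each $P_i$ each variable occurs at most once and the labels along $P_i$ are ordered according to $SV$. Size is the number of nodes. *)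

theory Defs
  imports Complex_Main
begin

datatype 'v lit = Pos 'v | Neg 'v

fun lvar :: "'v lit \<Rightarrow> 'v" where
  "lvar (Pos x) = x" | "lvar (Neg x) = x"

fun lit_true :: "('v \<Rightarrow> bool) \<Rightarrow> 'v lit \<Rightarrow> bool" where
  "lit_true \<sigma> (Pos x) = \<sigma> x" | "lit_true \<sigma> (Neg x) = (\<not> \<sigma> x)"

definition lits_of :: "('v \<Rightarrow> bool) \<Rightarrow> 'v lit set" where
  "lits_of \<sigma> = {l. lit_true \<sigma> l}"

type_synonym 'v clause = "'v lit set"
type_synonym 'v cnf = "'v clause set"

definition is_cnf :: "'v cnf \<Rightarrow> bool" where
  "is_cnf F \<longleftrightarrow> finite F \<and> (\<forall>C\<in>F. finite C)"

definition cnf_vars :: "'v cnf \<Rightarrow> 'v set" where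
  "cnf_vars F = {lvar l | l. \<exists>C\<in>F. l \<in> C}"

definition cnf_sat :: "('v \<Rightarrow> bool) \<Rightarrow> 'v cnf \<Rightarrow> bool" where
  "cnf_sat \<sigma> F \<longleftrightarrow> (\<forall>C\<in>F. \<exists>l\<in>C. l \<in> lits_of \<sigma>)"

text \<open>Undirected graphs are given by a vertex set and a set of 2-element edges.\<close>
definition primal_edges :: "'v cnf \<Rightarrow> 'v set set" where
  "primal_edges F = {{x, y} | x y. x \<noteq> y \<and> (\<exists>C\<in>F. x \<in> lvar ` C \<and> y \<in> lvar ` C)}"

definition connected_in :: "'t set \<Rightarrow> 't set set \<Rightarrow> bool" where
  "connected_in S TE \<longleftrightarrow>
     (\<forall>a\<in>S. \<forall>b\<in>S. (a, b) \<in> {(x, y). {x, y} \<in> TE \<and> x \<in> S \<and> y \<in> S}\<^sup>*)"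

definition is_tree :: "nat set \<Rightarrow> nat set set \<Rightarrow> bool" where
  "is_tree T TE \<longleftrightarrow> finite T \<and> T \<noteq> {} \<and>
     (\<forall>e\<in>TE. \<exists>a b. e = {a, b} \<and> a \<noteq> b \<and> a \<in> T \<and> b \<in> T) \<and>
     connected_in T TE \<and> card TE + 1 = card T"

definition tree_decomp ::
  "'v set \<Rightarrow> 'v set set \<Rightarrow> nat set \<Rightarrow> nat set set \<Rightarrow> (nat \<Rightarrow> 'v set) \<Rightarrow> bool" where
  "tree_decomp V E T TE bag \<longleftrightarrow> is_tree T TE \<and>
     (\<forall>t\<in>T. bag t \<subseteq> V) \<and>
     (\<forall>v\<in>V. \<exists>t\<in>T. v \<in> bag t) \<and>
     (\<forall>e\<in>E. \<exists>t\<in>T. e \<subseteq> bag t) \<and>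
     (\<forall>v\<in>V. connected_in {t\<in>T. v \<in> bag t} TE)"

definition treewidth :: "'v set \<Rightarrow> 'v set set \<Rightarrow> nat" where
  "treewidth V E = (LEAST k. \<exists>T TE bag. tree_decomp V E T TE bag \<and>
       (\<forall>t\<in>T. finite (bag t) \<and> card (bag t) \<le> k + 1))"

definition primal_treewidth :: "'v cnf \<Rightarrow> nat" where
  "primal_treewidth F = treewidth (cnf_vars F) (primal_edges F)"

text \<open>Edges are triples (source, optional literal label, target).\<close>
type_synonym 'v bp_edge = "nat \<times> 'v lit option \<times> nat"

record 'v bp =
  bp_nodes :: "nat set"
  bp_edges :: "'v bp_edge set"
  bp_root :: nat
  bp_leaf :: nat

definition bp_succ :: "'v bp \<Rightarrow> (nat \<times> nat) set" where
  "bp_succ B = {(u, w). \<exists>l. (u, l, w) \<in> bp_edges B}"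

definition is_nbp :: "'v bp \<Rightarrow> bool" where
  "is_nbp B \<longleftrightarrow> finite (bp_nodes B) \<and> finite (bp_edges B) \<and>
     (\<forall>(u, l, w)\<in>bp_edges B. u \<in> bp_nodes B \<and> w \<in> bp_nodes B) \<and>
     acyclic (bp_succ B) \<and>
     bp_root B \<in> bp_nodes B \<and> bp_leaf B \<in> bp_nodes B \<and>
     (\<forall>u\<in>bp_nodes B. (\<nexists>w. (w, u) \<in> bp_succ B) \<longleftrightarrow> u = bp_root B) \<and>
     (\<forall>u\<in>bp_nodes B. (\<nexists>w. (u, w) \<in> bp_succ B) \<longleftrightarrow> u = bp_leaf B)"

definition bp_size :: "'v bp \<Rightarrow> nat" where
  "bp_size B = card (bp_nodes B)"

fun is_path :: "'v bp_edge set \<Rightarrow> nat \<Rightarrow> 'v bp_edge list \<Rightarrow> nat \<Rightarrow> bool" where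
  "is_path E u [] w \<longleftrightarrow> u = w"
| "is_path E u (e # P) w \<longleftrightarrow> e \<in> E \<and> fst e = u \<and> is_path E (snd (snd e)) P w"

definition path_labels :: "'v bp_edge list \<Rightarrow> 'v lit set" where
  "path_labels P = {l. \<exists>u w. (u, Some l, w) \<in> set P}"

definition consistent :: "'v bp_edge list \<Rightarrow> bool" where
  "consistent P \<longleftrightarrow> \<not> (\<exists>x. Pos x \<in> path_labels P \<and> Neg x \<in> path_labels P)"

definition comp_path :: "'v bp \<Rightarrow> 'v bp_edge list \<Rightarrow> bool" where
  "comp_path B P \<longleftrightarrow> is_path (bp_edges B) (bp_root B) P (bp_leaf B) \<and> consistent P"

definition computes :: "'v bp \<Rightarrow> 'v cnf \<Rightarrow> bool" where
  "computes B F \<longleftrightarrow>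
     (\<forall>\<sigma>. cnf_sat \<sigma> F \<longleftrightarrow> (\<exists>P. comp_path B P \<and> path_labels P \<subseteq> lits_of \<sigma>))"

definition bp_vars :: "'v bp \<Rightarrow> 'v set" where
  "bp_vars B = {lvar l | l. \<exists>u w. (u, Some l, w) \<in> bp_edges B}"

definition label_vars :: "'v bp_edge list \<Rightarrow> 'v list" where
  "label_vars P = map lvar (List.map_filter (\<lambda>e. fst (snd e)) P)"

definition sv_less :: "'v list \<Rightarrow> 'v \<Rightarrow> 'v \<Rightarrow> bool" where
  "sv_less SV x y \<longleftrightarrow> (\<exists>i j. i < j \<and> j < length SV \<and> SV ! i = x \<and> SV ! j = y)"

definition is_c_NSOBDD :: "nat \<Rightarrow> 'v bp \<Rightarrow> bool" where
  "is_c_NSOBDD c B \<longleftrightarrow> is_nbp B \<and>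
     (\<exists>SV. distinct SV \<and> set SV = bp_vars B \<and>
        (\<forall>P. comp_path B P \<longrightarrow>
           (\<exists>Ps. length Ps = c \<and> concat Ps = P \<and>
              (\<forall>Q\<in>set Ps. sorted_wrt (sv_less SV) (label_vars Q)))))"

end

theory Submission
  imports Defs "HOL-Library.Countable" "HOL-Library.Sublist"
begin

text \<open>
  A c-NSOBDD with variable order SV cuts every computational path into c segments along which
  the variables increase. For an initial segment X of SV, each segment splits into a part labelled
  inside X followed by a part labelled outside X, so an accepting path is determined, up to
  splicing, by the 2c - 1 nodes where these 2c pieces meet. Hence a set of satisfying assignments,
  any two of which have a falsifying mixture (one on X, the other off X), has at most
  size^(2c - 1) elements.

  The formulas come from the complete ternary tree of depth d with every node blown up into a
  clique of s vertices and the cliques of adjacent nodes completely joined; every edge xy gives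
  the clause x \<or> y \<or> z_xy with a fresh variable z_xy. A tree decomposition along the ternary tree
  has bags of size 2s. For any order of the vertices, some cut of the order is crossed by a
  matching M with at least s(d - h) edges as soon as 3^h \<ge> s(d - h): either a whole subtree
  of height h has all its clusters split by the cut, or an induction up the tree collects s
  crossing edges per level. Making exactly one endpoint of each matched edge true, in all 2^|M| ways, gives a
  fooling set, whence size^(2c - 1) \<ge> 2^(s(d - h)); with s = \<lceil>p/2\<rceil> and d = 5h + 5 this is
  the claimed bound.
\<close>

section \<open>The fooling-set bound\<close>

definition path_end :: "nat \<Rightarrow> 'v bp_edge list \<Rightarrow> nat" where
  "path_end u P = (if P = [] then u else snd (snd (last P)))"

lemma is_path_append:
  "is_path E u (P @ Q) w \<longleftrightarrow> (\<exists>v. is_path E u P v \<and> is_path E v Q w)"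
  by (induction P arbitrary: u) auto

lemma is_path_end: "is_path E u P w \<Longrightarrow> w = path_end u P"
  by (induction P arbitrary: u) (auto simp: path_end_def)

lemma is_path_end_in:
  assumes "is_path E u P w" "u \<in> N" "\<forall>(a, l, b)\<in>E. b \<in> N"
  shows "w \<in> N"
  using assms by (induction P arbitrary: u) auto

lemma is_path_concat_nth:
  assumes "is_path E u (concat L) w" "i < length L"
  shows "is_path E (path_end u (concat (take i L))) (L ! i) (path_end u (concat (take (Suc i) L)))"
proof -
  have split: "concat L = (concat (take i L) @ L ! i) @ concat (drop (Suc i) L)"
    using assms(2) by (metis append.assoc concat.simps(2) concat_append id_take_nth_drop)
  obtain v1 v2 where "is_path E u (concat (take i L)) v1" "is_path E v1 (L ! i) v2"
    "is_path E u (concat (take i L) @ L ! i) v2"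
    using assms(1) unfolding split by (auto simp: is_path_append)
  moreover have "concat (take (Suc i) L) = concat (take i L) @ L ! i"
    using assms(2) by (simp add: take_Suc_conv_app_nth)
  ultimately show ?thesis
    using is_path_end by metis
qed

lemma is_path_concatI:
  assumes "\<forall>i<length L. is_path E (v i) (L ! i) (v (Suc i))"
  shows "is_path E (v 0) (concat L) (v (length L))"
proof -
  have "is_path E (v 0) (concat (take k L)) (v k)" if "k \<le> length L" for k
    using that
  proof (induction k)
    case (Suc k)
    have "concat (take (Suc k) L) = concat (take k L) @ L ! k"
      using Suc.prems by (simp add: take_Suc_conv_app_nth)
    then show ?case
      using Suc assms by (auto simp: is_path_append)
  qed simp
  from this[of "length L"] show ?thesis
    by simp
qed

lemma path_labels_concat: "path_labels (concat L) = (\<Union>Q\<in>set L. path_labels Q)"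
  by (auto simp: path_labels_def)

lemma consistent_if_labels_true: "path_labels P \<subseteq> lits_of \<sigma> \<Longrightarrow> consistent P"
  unfolding consistent_def lits_of_def
  by (metis (mono_tags) lit_true.simps mem_Collect_eq subsetD)

lemma lit_true_override_on:
  "lit_true (override_on \<tau> \<sigma> X) l = (if lvar l \<in> X then lit_true \<sigma> l else lit_true \<tau> l)"
  by (cases l) auto

definition down_closed :: "'v list \<Rightarrow> 'v set \<Rightarrow> bool" where
  "down_closed SV X \<longleftrightarrow> (\<forall>i j. i < j \<longrightarrow> j < length SV \<longrightarrow> SV ! j \<in> X \<longrightarrow> SV ! i \<in> X)"

definition paths_sorted :: "nat \<Rightarrow> 'v list \<Rightarrow> 'v bp \<Rightarrow> bool" where
  "paths_sorted c SV B \<longleftrightarrow>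
     (\<forall>P. comp_path B P \<longrightarrow> (\<exists>Ps. length Ps = c \<and> concat Ps = P \<and>
        (\<forall>Q\<in>set Ps. sorted_wrt (sv_less SV) (label_vars Q))))"

lemma is_c_NSOBDD_iff:
  "is_c_NSOBDD c B \<longleftrightarrow> is_nbp B \<and> (\<exists>SV. distinct SV \<and> set SV = bp_vars B \<and> paths_sorted c SV B)"
  by (simp add: is_c_NSOBDD_def paths_sorted_def)

definition label_in :: "'v set \<Rightarrow> 'v bp_edge \<Rightarrow> bool" where
  "label_in X e \<longleftrightarrow> (\<forall>l. fst (snd e) = Some l \<longrightarrow> lvar l \<in> X)"

lemma label_vars_Cons:
  "label_vars (e # P) = (case fst (snd e) of None \<Rightarrow> label_vars P | Some l \<Rightarrow> lvar l # label_vars P)"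
  by (simp add: label_vars_def split: option.split)

lemma label_vars_append: "label_vars (P @ Q) = label_vars P @ label_vars Q"
  by (simp add: label_vars_def map_filter_def)

lemma lvar_in_label_vars: "l \<in> path_labels P \<Longrightarrow> lvar l \<in> set (label_vars P)"
  by (induction P) (auto simp: path_labels_def label_vars_Cons split: option.split)

lemma path_labels_takeWhile_label_in:
  "l \<in> path_labels (takeWhile (label_in X) Q) \<Longrightarrow> lvar l \<in> X"
  by (auto simp: path_labels_def label_in_def dest!: set_takeWhileD)

text \<open>Along a sorted segment, once a variable outside the initial segment X has occurred,
  no variable of X can occur again.\<close>
lemma path_labels_dropWhile_label_in:
  assumes "sorted_wrt (sv_less SV) (label_vars Q)" "down_closed SV X"
    and "l \<in> path_labels (dropWhile (label_in X) Q)"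
  shows "lvar l \<notin> X"
proof -
  obtain e D where D: "dropWhile (label_in X) Q = e # D"
    using assms(3) by (cases "dropWhile (label_in X) Q") (auto simp: path_labels_def)
  then obtain l0 where l0: "fst (snd e) = Some l0" "lvar l0 \<notin> X"
    by (metis dropWhile_eq_Cons_conv label_in_def)
  have "Q = takeWhile (label_in X) Q @ e # D"
    using D by (metis takeWhile_dropWhile_id)
  then have lv: "label_vars Q = label_vars (takeWhile (label_in X) Q) @ lvar l0 # label_vars D"
    by (metis label_vars_append label_vars_Cons l0(1) option.simps(5))
  show ?thesis
  proof (cases "l \<in> path_labels D")
    case True
    then have "sv_less SV (lvar l0) (lvar l)"
      using assms(1) lv lvar_in_label_vars by (fastforce simp: sorted_wrt_append)
    then show ?thesis
      using assms(2) l0(2) unfolding sv_less_def down_closed_def by metis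
  next
    case False
    then show ?thesis
      using assms(3) D l0 by (auto simp: path_labels_def)
  qed
qed

definition split_at :: "'v set \<Rightarrow> 'v bp_edge list list \<Rightarrow> 'v bp_edge list list" where
  "split_at X Ps = concat (map (\<lambda>Q. [takeWhile (label_in X) Q, dropWhile (label_in X) Q]) Ps)"

lemma length_split_at: "length (split_at X Ps) = 2 * length Ps"
  by (induction Ps) (auto simp: split_at_def)

lemma concat_split_at: "concat (split_at X Ps) = concat Ps"
  by (induction Ps) (auto simp: split_at_def)

lemma nth_split_at:
  "i < 2 * length Ps \<Longrightarrow> split_at X Ps ! i =
     (if even i then takeWhile (label_in X) (Ps ! (i div 2)) else dropWhile (label_in X) (Ps ! (i div 2)))"
proof (induction Ps arbitrary: i)
  case (Cons Q Ps)
  have "split_at X (Q # Ps) = takeWhile (label_in X) Q # dropWhile (label_in X) Q # split_at X Ps"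
    by (simp add: split_at_def)
  moreover have "\<And>j. i = Suc (Suc j) \<Longrightarrow> j < 2 * length Ps"
    using Cons.prems by simp
  ultimately show ?case
    using Cons.IH by (cases i; cases "i - 1") auto
qed simp

definition alternates :: "'v set \<Rightarrow> 'v bp_edge list list \<Rightarrow> bool" where
  "alternates X L \<longleftrightarrow> (\<forall>i<length L. \<forall>l\<in>path_labels (L ! i). lvar l \<in> X \<longleftrightarrow> even i)"

lemma alternates_split_at:
  assumes "\<forall>Q\<in>set Ps. sorted_wrt (sv_less SV) (label_vars Q)" "down_closed SV X"
  shows "alternates X (split_at X Ps)"
  unfolding alternates_def length_split_at
proof (intro allI impI ballI)
  fix i l assume i: "i < 2 * length Ps" and l: "l \<in> path_labels (split_at X Ps ! i)"
  have "sorted_wrt (sv_less SV) (label_vars (Ps ! (i div 2)))"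
    using assms(1) i by auto
  then show "lvar l \<in> X \<longleftrightarrow> even i"
    using l nth_split_at[OF i] assms(2) path_labels_takeWhile_label_in
      path_labels_dropWhile_label_in by (metis (full_types))
qed

lemma accepting_path_alternates:
  assumes "paths_sorted c SV B" "down_closed SV X" "computes B F" "cnf_sat \<sigma> F"
  obtains L where "length L = 2 * c" "comp_path B (concat L)"
    "path_labels (concat L) \<subseteq> lits_of \<sigma>" "alternates X L"
proof -
  obtain P where P: "comp_path B P" "path_labels P \<subseteq> lits_of \<sigma>"
    using assms(3,4) unfolding computes_def by blast
  then obtain Ps where "length Ps = c" "concat Ps = P"
    "\<forall>Q\<in>set Ps. sorted_wrt (sv_less SV) (label_vars Q)"
    using assms(1) unfolding paths_sorted_def by blast
  then show ?thesis
    using that[of "split_at X Ps"] P alternates_split_at[OF _ assms(2)]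
    by (simp add: length_split_at concat_split_at)
qed

definition junctions :: "nat \<Rightarrow> 'v bp_edge list list \<Rightarrow> nat list" where
  "junctions u L = map (\<lambda>i. path_end u (concat (take i L))) [1..<length L]"

lemma junctions_in_nodes:
  assumes "is_nbp B" "is_path (bp_edges B) (bp_root B) (concat L) w"
  shows "set (junctions (bp_root B) L) \<subseteq> bp_nodes B"
proof
  fix v assume "v \<in> set (junctions (bp_root B) L)"
  then obtain i where v: "v = path_end (bp_root B) (concat (take i L))"
    by (auto simp: junctions_def)
  have "concat L = concat (take i L) @ concat (drop i L)"
    by (metis append_take_drop_id concat_append)
  then obtain v' where "is_path (bp_edges B) (bp_root B) (concat (take i L)) v'"
    using assms(2) by (metis is_path_append)
  moreover have "bp_root B \<in> bp_nodes B" "\<forall>(a, l, b)\<in>bp_edges B. b \<in> bp_nodes B"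
    using assms(1) unfolding is_nbp_def by blast+
  ultimately show "v \<in> bp_nodes B"
    using v is_path_end is_path_end_in by metis
qed

definition interleave :: "'v bp_edge list list \<Rightarrow> 'v bp_edge list list \<Rightarrow> 'v bp_edge list list" where
  "interleave L L' = map (\<lambda>i. if even i then L ! i else L' ! i) [0..<length L]"

lemma is_path_interleave:
  assumes "is_path E u (concat L) w" "is_path E u (concat L') w" "length L' = length L"
    and "junctions u L = junctions u L'"
  shows "is_path E u (concat (interleave L L')) w"
proof -
  define v where "v i = path_end u (concat (take i L))" for i
  have v': "v i = path_end u (concat (take i L'))" if le: "i \<le> length L" for i
  proof -
    consider "i = 0" | "i = length L" | "0 < i" "i < length L"
      using le by fastforce
    then show ?thesis
    proof cases
      case 3
      then have "i - 1 < length [1..<length L]" "[1..<length L] ! (i - 1) = i"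
        by auto
      then show ?thesis
        using assms(3,4) unfolding junctions_def v_def by (metis nth_map)
    next
      case 2
      then show ?thesis
        using assms(1-3) is_path_end by (metis order_refl take_all v_def)
    qed (simp add: v_def path_end_def)
  qed
  have "is_path E (v i) (interleave L L' ! i) (v (Suc i))" if "i < length L" for i
    using is_path_concat_nth[OF assms(1) that] is_path_concat_nth[OF assms(2)] that assms(3) v'
    by (simp add: interleave_def v_def)
  then have "is_path E (v 0) (concat (interleave L L')) (v (length L))"
    using is_path_concatI[of "interleave L L'"] by (simp add: interleave_def)
  moreover have "v 0 = u" "v (length L) = w"
    using is_path_end[OF assms(1)] by (simp_all add: v_def path_end_def)
  ultimately show ?thesis
    by simp
qed

lemma path_labels_interleave:
  assumes "alternates X L" "alternates X L'" "length L' = length L"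
    and "path_labels (concat L) \<subseteq> lits_of \<sigma>" "path_labels (concat L') \<subseteq> lits_of \<tau>"
  shows "path_labels (concat (interleave L L')) \<subseteq> lits_of (override_on \<tau> \<sigma> X)"
proof
  fix l assume "l \<in> path_labels (concat (interleave L L'))"
  then obtain i where i: "i < length L" "l \<in> path_labels (if even i then L ! i else L' ! i)"
    by (auto simp: path_labels_concat interleave_def)
  show "l \<in> lits_of (override_on \<tau> \<sigma> X)"
  proof (cases "even i")
    case True
    then have "lvar l \<in> X"
      using i assms(1) by (auto simp: alternates_def)
    moreover have "l \<in> lits_of \<sigma>"
    proof -
      have "l \<in> path_labels (L ! i)" "L ! i \<in> set L"
        using i True by simp_all
      then show ?thesis
        using assms(4) unfolding path_labels_concat by blast
    qed
    ultimately show ?thesis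
      by (simp add: lits_of_def lit_true_override_on)
  next
    case False
    then have "lvar l \<notin> X"
      using i assms(2,3) by (auto simp: alternates_def)
    moreover have "l \<in> lits_of \<tau>"
    proof -
      have "l \<in> path_labels (L' ! i)" "L' ! i \<in> set L'"
        using i False assms(3) by simp_all
      then show ?thesis
        using assms(5) unfolding path_labels_concat by blast
    qed
    ultimately show ?thesis
      by (simp add: lits_of_def lit_true_override_on)
  qed
qed

text \<open>Two accepting paths through the same junctions can be interleaved, so the X-part of
  one assignment combined with the rest of the other is accepted as well.\<close>
lemma fooling_set_card_le:
  assumes "is_nbp B" "paths_sorted c SV B" "computes B F" "down_closed SV X"
    and sat: "\<forall>\<sigma>\<in>S. cnf_sat \<sigma> F"
    and fool: "\<forall>\<sigma>\<in>S. \<forall>\<tau>\<in>S. \<sigma> \<noteq> \<tau> \<longrightarrow>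
      \<not> cnf_sat (override_on \<tau> \<sigma> X) F \<or> \<not> cnf_sat (override_on \<sigma> \<tau> X) F"
  shows "card S \<le> bp_size B ^ (2 * c - 1)"
proof -
  have "\<forall>\<sigma>\<in>S. \<exists>L. length L = 2 * c \<and> comp_path B (concat L) \<and>
      path_labels (concat L) \<subseteq> lits_of \<sigma> \<and> alternates X L"
    using accepting_path_alternates[OF assms(2) assms(4) assms(3)] sat by metis
  then obtain L where L: "\<And>\<sigma>. \<sigma> \<in> S \<Longrightarrow> length (L \<sigma>) = 2 * c \<and> comp_path B (concat (L \<sigma>)) \<and>
      path_labels (concat (L \<sigma>)) \<subseteq> lits_of \<sigma> \<and> alternates X (L \<sigma>)"
    by metis
  define J where "J \<sigma> = junctions (bp_root B) (L \<sigma>)" for \<sigma>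
  have accepts: "cnf_sat (override_on \<tau> \<sigma> X) F"
    if "\<sigma> \<in> S" "\<tau> \<in> S" "J \<sigma> = J \<tau>" for \<sigma> \<tau>
  proof -
    let ?P = "concat (interleave (L \<sigma>) (L \<tau>))"
    have "is_path (bp_edges B) (bp_root B) ?P (bp_leaf B)"
      using L[OF that(1)] L[OF that(2)] that(3)
      by (intro is_path_interleave) (auto simp: comp_path_def J_def)
    moreover have "path_labels ?P \<subseteq> lits_of (override_on \<tau> \<sigma> X)"
      using L[OF that(1)] L[OF that(2)] by (intro path_labels_interleave) auto
    ultimately show ?thesis
      using assms(3) consistent_if_labels_true unfolding computes_def comp_path_def by blast
  qed
  have "inj_on J S"
    using accepts fool by (metis inj_onI)
  moreover have "J ` S \<subseteq> {js. set js \<subseteq> bp_nodes B \<and> length js = 2 * c - 1}"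
    using L junctions_in_nodes[OF assms(1)] by (fastforce simp: J_def junctions_def comp_path_def)
  moreover have "finite (bp_nodes B)"
    using assms(1) by (simp add: is_nbp_def)
  ultimately have "card S \<le> card {js. set js \<subseteq> bp_nodes B \<and> length js = 2 * c - 1}"
    by (intro card_inj_on_le finite_lists_length_eq)
  then show ?thesis
    by (simp add: card_lists_length_eq \<open>finite (bp_nodes B)\<close> bp_size_def)
qed

section \<open>Crossing matchings in the blown-up ternary tree\<close>

definition adj :: "('a \<times> 'a) set \<Rightarrow> 'a \<Rightarrow> 'a \<Rightarrow> bool" where
  "adj E x y \<longleftrightarrow> (x, y) \<in> E \<or> (y, x) \<in> E"

definition crossing_matching ::
  "('a \<times> 'a) set \<Rightarrow> ('a \<Rightarrow> nat) \<Rightarrow> nat \<Rightarrow> 'a set \<Rightarrow> ('a \<times> 'a) set \<Rightarrow> bool" where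
  "crossing_matching E r k W M \<longleftrightarrow> finite M \<and> inj_on fst M \<and> inj_on snd M \<and>
     (\<forall>(x, y)\<in>M. adj E x y \<and> r x < k \<and> k \<le> r y \<and> x \<in> W \<and> y \<in> W)"

lemma crossing_matching_empty: "crossing_matching E r k W {}"
  by (simp add: crossing_matching_def)

lemma crossing_matching_mono:
  "crossing_matching E r k W M \<Longrightarrow> W \<subseteq> W' \<Longrightarrow> crossing_matching E r k W' M"
  by (auto simp: crossing_matching_def)

lemma crossing_matchingD:
  "crossing_matching E r k W M \<Longrightarrow> (x, y) \<in> M \<Longrightarrow> adj E x y \<and> r x < k \<and> k \<le> r y \<and> x \<in> W \<and> y \<in> W"
  unfolding crossing_matching_def by blast

lemma crossing_matching_endpoints:
  assumes "crossing_matching E r k W M" "(x, y) \<in> M"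
  shows "(y, y') \<notin> M" "(x', x) \<notin> M" "(x, y') \<in> M \<longleftrightarrow> y' = y" "(x', y) \<in> M \<longleftrightarrow> x' = x"
proof -
  show "(y, y') \<notin> M" "(x', x) \<notin> M"
    using crossing_matchingD[OF assms(1)] assms(2) by (meson leD)+
  show "(x, y') \<in> M \<longleftrightarrow> y' = y" "(x', y) \<in> M \<longleftrightarrow> x' = x"
    using assms unfolding crossing_matching_def inj_on_def by fastforce+
qed

lemma crossing_matching_Un:
  assumes "crossing_matching E r k W1 M1" "crossing_matching E r k W2 M2" "W1 \<inter> W2 = {}"
  shows "crossing_matching E r k (W1 \<union> W2) (M1 \<union> M2)" "card (M1 \<union> M2) = card M1 + card M2"
proof -
  have "fst ` M1 \<subseteq> W1" "snd ` M1 \<subseteq> W1" "fst ` M2 \<subseteq> W2" "snd ` M2 \<subseteq> W2"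
    using assms(1,2) unfolding crossing_matching_def by fastforce+
  then have disj: "fst ` M1 \<inter> fst ` M2 = {}" "snd ` M1 \<inter> snd ` M2 = {}" "M1 \<inter> M2 = {}"
    using assms(3) by blast+
  have "inj_on fst (M1 \<union> M2)" "inj_on snd (M1 \<union> M2)"
    using assms(1,2) disj(1,2) unfolding crossing_matching_def inj_on_Un by blast+
  then show "crossing_matching E r k (W1 \<union> W2) (M1 \<union> M2)"
    using assms(1,2) unfolding crossing_matching_def by blast
  show "card (M1 \<union> M2) = card M1 + card M2"
    using assms(1,2) disj(3) by (simp add: crossing_matching_def card_Un_disjoint)
qed

lemma crossing_matching_between:
  assumes "finite A" "finite B" "\<forall>x\<in>A. \<forall>y\<in>B. adj E x y \<and> r x < k \<and> k \<le> r y"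
  obtains M where "crossing_matching E r k (A \<union> B) M" "card M = min (card A) (card B)"
proof (cases "card A \<le> card B")
  case True
  then obtain f where f: "inj_on f A" "f ` A \<subseteq> B"
    using card_le_inj[OF assms(1,2)] by blast
  let ?M = "(\<lambda>x. (x, f x)) ` A"
  have "crossing_matching E r k (A \<union> B) ?M"
    unfolding crossing_matching_def
  proof (intro conjI)
    show "inj_on fst ?M" "inj_on snd ?M"
      using f(1) by (auto simp: inj_on_def)
    show "\<forall>(x, y)\<in>?M. adj E x y \<and> r x < k \<and> k \<le> r y \<and> x \<in> A \<union> B \<and> y \<in> A \<union> B"
      using f(2) assms(3) by fast
  qed (use assms(1) in simp)
  moreover have "card ?M = card A"
    by (rule card_image) (auto simp: inj_on_def)
  ultimately show ?thesis
    using that True by simp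
next
  case False
  then obtain g where g: "inj_on g B" "g ` B \<subseteq> A"
    using card_le_inj[OF assms(2,1)] by fastforce
  let ?M = "(\<lambda>y. (g y, y)) ` B"
  have "crossing_matching E r k (A \<union> B) ?M"
    unfolding crossing_matching_def
  proof (intro conjI)
    show "inj_on fst ?M" "inj_on snd ?M"
      using g(1) by (auto simp: inj_on_def)
    show "\<forall>(x, y)\<in>?M. adj E x y \<and> r x < k \<and> k \<le> r y \<and> x \<in> A \<union> B \<and> y \<in> A \<union> B"
      using g(2) assms(3) by fast
  qed (use assms(2) in simp)
  moreover have "card ?M = card B"
    by (rule card_image) (auto simp: inj_on_def)
  ultimately show ?thesis
    using that False by simp
qed

type_synonym vertex = "nat list \<times> nat"

definition ternary_words :: "nat \<Rightarrow> nat list set" where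
  "ternary_words h = {w. length w \<le> h \<and> set w \<subseteq> {..<3}}"

text \<open>The tree node w (a ternary word of length at most d) is blown up into the clique
  of the s vertices (w, j), and the cliques of a node and of its children are completely joined.\<close>
definition blowup_vertices :: "nat \<Rightarrow> nat \<Rightarrow> vertex set" where
  "blowup_vertices s d = {(w, j). w \<in> ternary_words d \<and> j < s}"

definition blowup_edges :: "nat \<Rightarrow> nat \<Rightarrow> (vertex \<times> vertex) set" where
  "blowup_edges s d =
     {((w, j), (w, j')) | w j j'. w \<in> ternary_words d \<and> j < j' \<and> j' < s} \<union>
     {((w, j), (w @ [i], j')) | w i j j'. w @ [i] \<in> ternary_words d \<and> j < s \<and> j' < s}"

definition cluster :: "nat \<Rightarrow> nat list \<Rightarrow> vertex set" where
  "cluster s w = (\<lambda>j. (w, j)) ` {..<s}"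

definition subtree_vertices :: "nat \<Rightarrow> nat list \<Rightarrow> nat \<Rightarrow> vertex set" where
  "subtree_vertices s a h = {(a @ z, j) | z j. z \<in> ternary_words h \<and> j < s}"

lemma finite_ternary_words: "finite (ternary_words h)"
  using finite_lists_length_le[of "{..<3::nat}" h]
  by (simp add: ternary_words_def conj_commute)

lemma ternary_words_prefix: "u @ v \<in> ternary_words d \<Longrightarrow> u \<in> ternary_words d"
  by (auto simp: ternary_words_def)

lemma ternary_words_butlast: "w \<in> ternary_words d \<Longrightarrow> butlast w \<in> ternary_words d"
  by (auto simp: ternary_words_def dest: in_set_butlastD)

lemma card_cluster: "card (cluster s w) = s"
  by (simp add: cluster_def card_image inj_on_def)

lemma finite_cluster: "finite (cluster s w)"
  by (simp add: cluster_def)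

lemma mem_cluster: "x \<in> cluster s w \<longleftrightarrow> fst x = w \<and> snd x < s"
  by (cases x) (auto simp: cluster_def)

lemma finite_blowup_vertices: "finite (blowup_vertices s d)"
proof -
  have "blowup_vertices s d = ternary_words d \<times> {..<s}"
    by (auto simp: blowup_vertices_def)
  then show ?thesis
    by (simp add: finite_ternary_words)
qed

lemma blowup_edges_vertices:
  "e \<in> blowup_edges s d \<Longrightarrow> fst e \<in> blowup_vertices s d \<and> snd e \<in> blowup_vertices s d"
  by (auto simp: blowup_edges_def blowup_vertices_def dest: ternary_words_prefix)

lemma adj_blowup_edges_cluster:
  assumes "w \<in> ternary_words d" "j < s" "j' < s" "j \<noteq> j'"
  shows "adj (blowup_edges s d) (w, j) (w, j')"
  using assms by (cases "j < j'") (auto simp: adj_def blowup_edges_def)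

lemma blowup_edge_child:
  "e \<in> blowup_edges s d \<Longrightarrow> fst (snd e) = fst (fst e) \<or> (\<exists>i. fst (snd e) = fst (fst e) @ [i])"
  by (auto simp: blowup_edges_def)

lemma finite_blowup_edges: "finite (blowup_edges s d)"
proof -
  have "blowup_edges s d \<subseteq> blowup_vertices s d \<times> blowup_vertices s d"
    using blowup_edges_vertices by fastforce
  then show ?thesis
    using finite_blowup_vertices finite_subset by blast
qed

lemma subtree_vertices_child: "i < 3 \<Longrightarrow> subtree_vertices s (a @ [i]) h \<subseteq> subtree_vertices s a (Suc h)"
  by (auto simp: subtree_vertices_def ternary_words_def)

definition clusters_joined :: "(vertex \<times> vertex) set \<Rightarrow> nat \<Rightarrow> nat list \<Rightarrow> nat list \<Rightarrow> bool" where
  "clusters_joined E s w w' \<longleftrightarrow> (\<forall>x\<in>cluster s w. \<forall>y\<in>cluster s w'. adj E x y)"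

lemma clusters_joined_sym: "clusters_joined E s w w' = clusters_joined E s w' w"
  by (auto simp: clusters_joined_def adj_def)

lemma clusters_joined_child:
  "w @ [i] \<in> ternary_words d \<Longrightarrow> clusters_joined (blowup_edges s d) s w (w @ [i])"
  unfolding clusters_joined_def adj_def blowup_edges_def cluster_def by blast

lemma successively_clusters_joined_prefixes:
  "b @ z \<in> ternary_words d \<Longrightarrow>
     successively (clusters_joined (blowup_edges s d) s) (map ((@) b) (prefixes z))"
proof (induction z arbitrary: b)
  case (Cons i z)
  have child: "b @ [i] \<in> ternary_words d"
    using Cons.prems ternary_words_prefix[of "b @ [i]" z] by simp
  have "(b @ [i]) @ z \<in> ternary_words d"
    using Cons.prems by simp
  then have IH: "successively (clusters_joined (blowup_edges s d) s) (map ((@) (b @ [i])) (prefixes z))"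
    by (rule Cons.IH)
  have split: "map ((@) b) (prefixes (i # z)) = b # map ((@) (b @ [i])) (prefixes z)"
    by simp
  have "hd (map ((@) (b @ [i])) (prefixes z)) = b @ [i]"
    by (simp add: hd_map)
  then show ?case
    unfolding split successively_Cons using IH clusters_joined_child[OF child] by metis
qed simp

lemma crossing_matching_into_cluster:
  assumes "clusters_joined E s n n'" "H \<subseteq> cluster s n" "\<forall>x\<in>H. r x < k"
  obtains M where "crossing_matching E r k (H \<union> {y\<in>cluster s n'. k \<le> r y}) M"
    "card H \<le> card M + card {y\<in>cluster s n'. r y < k}"
proof -
  let ?X = "{y\<in>cluster s n'. r y < k}" and ?Y = "{y\<in>cluster s n'. k \<le> r y}"
  have "finite H"
    using assms(2) finite_cluster finite_subset by blast
  have "finite ?X" "finite ?Y"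
    using finite_cluster by simp_all
  have "?X \<union> ?Y = cluster s n'" "?X \<inter> ?Y = {}"
    by auto
  then have "card ?X + card ?Y = s"
    using card_Un_disjoint[OF \<open>finite ?X\<close> \<open>finite ?Y\<close>] card_cluster by metis
  moreover have "card H \<le> s"
    using assms(2) card_mono[OF finite_cluster] card_cluster by metis
  moreover have "\<forall>x\<in>H. \<forall>y\<in>?Y. adj E x y \<and> r x < k \<and> k \<le> r y"
    using assms unfolding clusters_joined_def by auto
  then obtain M where M: "crossing_matching E r k (H \<union> ?Y) M" "card M = min (card H) (card ?Y)"
    using crossing_matching_between[OF \<open>finite H\<close> \<open>finite ?Y\<close>] by blast
  ultimately have "card H \<le> card M + card ?X"
    by (cases "card H \<le> card ?Y") simp_all
  with M(1) show ?thesis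
    by (rule that)
qed

text \<open>Walking along a path of pairwise joined clusters from one that lies below the cut to one
  that lies above it: the vertices below the cut are matched into the next cluster as far as it
  lies above the cut, and its part below the cut is passed on.\<close>
lemma crossing_matching_along_path:
  assumes "successively (clusters_joined E s) ns" "distinct ns" "ns \<noteq> []"
    and "\<forall>x\<in>cluster s (last ns). k \<le> r x" "H \<subseteq> cluster s (hd ns)" "\<forall>x\<in>H. r x < k"
  shows "\<exists>M. crossing_matching E r k (H \<union> \<Union>(cluster s ` set (tl ns))) M \<and> card H \<le> card M"
  using assms
proof (induction ns arbitrary: H rule: induct_list012)
  case (2 n)
  have "x \<notin> H" for x
  proof
    assume "x \<in> H"
    then have "x \<in> cluster s n" "r x < k"
      using "2.prems"(5,6) by auto
    then show False
      using "2.prems"(4) by (simp add: not_le[symmetric])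
  qed
  then have "H = {}"
    by blast
  then show ?case
    by (intro exI[of _ "{}"]) (simp add: crossing_matching_empty)
next
  case (3 n n' rest)
  define X where "X = {y\<in>cluster s n'. r y < k}"
  define Y where "Y = {y\<in>cluster s n'. k \<le> r y}"
  obtain M1 where M1: "crossing_matching E r k (H \<union> Y) M1" "card H \<le> card M1 + card X"
    using crossing_matching_into_cluster[of E s n n' H r k] 3(3,7,8) by (auto simp: X_def Y_def)
  have "\<exists>M. crossing_matching E r k (X \<union> \<Union>(cluster s ` set (tl (n' # rest)))) M \<and> card X \<le> card M"
    using 3(3,4,6) by (intro "3.IH"(2)) (auto simp: X_def)
  then obtain M2 where M2: "crossing_matching E r k (X \<union> \<Union>(cluster s ` set rest)) M2" "card X \<le> card M2"
    by auto
  have "cluster s n \<inter> (cluster s n' \<union> \<Union>(cluster s ` set rest)) = {}"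
    "cluster s n' \<inter> \<Union>(cluster s ` set rest) = {}"
    using 3(4) by (auto simp: mem_cluster)
  moreover have "X \<subseteq> cluster s n'" "Y \<subseteq> cluster s n'" "Y \<inter> X = {}" "H \<subseteq> cluster s n"
    using 3(7) by (auto simp: X_def Y_def)
  ultimately have "(H \<union> Y) \<inter> (X \<union> \<Union>(cluster s ` set rest)) = {}"
    by blast
  note U = crossing_matching_Un[OF M1(1) M2(1) this]
  have "H \<union> Y \<union> (X \<union> \<Union>(cluster s ` set rest)) \<subseteq> H \<union> \<Union>(cluster s ` set (tl (n # n' # rest)))"
    using \<open>X \<subseteq> cluster s n'\<close> \<open>Y \<subseteq> cluster s n'\<close> by auto
  moreover have "card H \<le> card (M1 \<union> M2)"
    using U(2) M1(2) M2(2) by linarith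
  ultimately show ?case
    using crossing_matching_mono[OF U(1)] by blast
qed simp

section \<open>Every vertex order has a large crossing matching\<close>

lemma ex_sorted_three:
  fixes f :: "nat \<Rightarrow> 'a::linorder"
  obtains x y z where "x < 3" "y < 3" "z < 3" "distinct [x, y, z]" "f x \<le> f y" "f y \<le> f z"
proof -
  have "length (sort_key f [0::nat, 1, 2]) = 3"
    by (simp only: length_sort) simp
  then obtain x y z where xyz: "sort_key f [0, 1, 2] = [x, y, z]"
    by (auto simp only: numeral_3_eq_3 length_Suc_conv length_0_conv)
  have "set [x, y, z] = {0, 1, 2}" "distinct [x, y, z]"
    unfolding xyz[symmetric] set_sort distinct_sort by simp_all
  then have "x \<in> {0, 1, 2}" "y \<in> {0, 1, 2}" "z \<in> {0, 1, 2}"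
    by (metis list.set_intros(1,2))+
  then have "x < 3" "y < 3" "z < 3"
    by auto
  moreover have "sorted (map f [x, y, z])"
    unfolding xyz[symmetric] by (rule sorted_sort_key)
  ultimately show ?thesis
    using that \<open>distinct [x, y, z]\<close> by simp
qed

definition cluster_below :: "nat \<Rightarrow> (vertex \<Rightarrow> nat) \<Rightarrow> nat \<Rightarrow> nat list \<Rightarrow> bool" where
  "cluster_below s r k w \<longleftrightarrow> (\<forall>x\<in>cluster s w. r x < k)"

definition cluster_above :: "nat \<Rightarrow> (vertex \<Rightarrow> nat) \<Rightarrow> nat \<Rightarrow> nat list \<Rightarrow> bool" where
  "cluster_above s r k w \<longleftrightarrow> (\<forall>x\<in>cluster s w. k \<le> r x)"

definition subtree_spans_cut :: "nat \<Rightarrow> (vertex \<Rightarrow> nat) \<Rightarrow> nat \<Rightarrow> nat list \<Rightarrow> nat \<Rightarrow> bool" where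
  "subtree_spans_cut s r k a h \<longleftrightarrow>
     (\<exists>z\<in>ternary_words h. cluster_below s r k (a @ z)) \<and> (\<exists>z\<in>ternary_words h. cluster_above s r k (a @ z))"

definition cut_splits_subtree :: "nat \<Rightarrow> (vertex \<Rightarrow> nat) \<Rightarrow> nat \<Rightarrow> nat list \<Rightarrow> nat \<Rightarrow> bool" where
  "cut_splits_subtree s r k a h \<longleftrightarrow>
     (\<forall>z\<in>ternary_words h. \<not> cluster_below s r k (a @ z) \<and> \<not> cluster_above s r k (a @ z))"

lemma cluster_other_rank:
  assumes "2 \<le> s" "inj_on r (cluster s w)" "x \<in> cluster s w"
  obtains y where "y \<in> cluster s w" "r y \<noteq> r x"
proof -
  obtain y where "y \<in> cluster s w" "y \<noteq> x"
    using card_cluster[of s w] assms(1,3)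
    by (metis card_1_singletonE card_le_Suc0_iff_eq finite_cluster not_less_eq_eq numerals(2))
  then show ?thesis
    using that assms(2,3) by (meson inj_onD)
qed

text \<open>The largest of the cluster minima in a subtree.\<close>
lemma max_cluster_min:
  assumes "2 \<le> s"
  obtains zs x where "zs \<in> ternary_words h" "x \<in> cluster s (a @ zs)"
    "cluster_above s r (r x) (a @ zs)" "\<forall>z\<in>ternary_words h. \<not> cluster_above s r (Suc (r x)) (a @ z)"
proof -
  define mn where "mn z = Min (r ` cluster s (a @ z))" for z
  have "cluster s w \<noteq> {}" for w
    using assms card_cluster[of s w] by auto
  then have mn_in: "\<exists>x\<in>cluster s (a @ z). r x = mn z" for z
    using Min_in[of "r ` cluster s (a @ z)"] finite_cluster by (fastforce simp: mn_def)
  have "finite (ternary_words h)" "ternary_words h \<noteq> {}"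
    using finite_ternary_words by (auto simp: ternary_words_def intro: exI[of _ "[]"])
  then obtain zs where zs: "zs \<in> ternary_words h" "\<forall>z\<in>ternary_words h. mn z \<le> mn zs"
    using Max_in[of "mn ` ternary_words h"] Max_ge[of "mn ` ternary_words h"]
    by (metis (no_types, lifting) finite_imageI image_iff image_is_empty)
  obtain x where "x \<in> cluster s (a @ zs)" "r x = mn zs"
    using mn_in by blast
  moreover have "cluster_above s r (mn zs) (a @ zs)"
    using finite_cluster by (simp add: cluster_above_def mn_def)
  moreover have "\<not> cluster_above s r (Suc (mn zs)) (a @ z)" if "z \<in> ternary_words h" for z
    using mn_in[of z] zs(2) that by (force simp: cluster_above_def)
  ultimately show ?thesis
    using that zs(1) by metis
qed

text \<open>With \<kappa> the largest cluster minimum: either some cluster lies below \<kappa>, or the cut at \<kappa> + 1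
  splits every cluster, since the cluster attaining \<kappa> has a second vertex above \<kappa>.\<close>
lemma subtree_spans_or_splits_cut:
  assumes "2 \<le> s" "inj_on r (blowup_vertices s d)" "length a + h \<le> d" "set a \<subseteq> {..<3}"
  shows "\<exists>k. subtree_spans_cut s r k a h \<or> cut_splits_subtree s r k a h"
proof -
  obtain zs xs where zs: "zs \<in> ternary_words h" "xs \<in> cluster s (a @ zs)"
    "cluster_above s r (r xs) (a @ zs)" "\<forall>z\<in>ternary_words h. \<not> cluster_above s r (Suc (r xs)) (a @ z)"
    using max_cluster_min[OF assms(1)] by blast
  have in_V: "cluster s (a @ z) \<subseteq> blowup_vertices s d" if "z \<in> ternary_words h" for z
    using that assms(3,4) by (auto simp: cluster_def blowup_vertices_def ternary_words_def)
  then obtain y where y: "y \<in> cluster s (a @ zs)" "r xs < r y"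
    using cluster_other_rank[OF assms(1) inj_on_subset[OF assms(2)] zs(2)] zs(1,3)
    by (metis cluster_above_def order_le_neq_trans)
  show ?thesis
  proof (cases "\<exists>z\<in>ternary_words h. cluster_below s r (r xs) (a @ z)")
    case True
    then show ?thesis
      using zs(1,3) by (auto simp: subtree_spans_cut_def)
  next
    case False
    have "\<not> cluster_below s r (Suc (r xs)) (a @ z)" if z: "z \<in> ternary_words h" for z
    proof -
      obtain x where x: "x \<in> cluster s (a @ z)" "r xs \<le> r x"
        using False z by (auto simp: cluster_below_def not_less)
      show ?thesis
      proof (cases "r x = r xs")
        case True
        then have "x = xs"
          using assms(2) x(1) zs(2) in_V[OF z] in_V[OF zs(1)] by (metis inj_onD subsetD)
        then have "a @ z = a @ zs"
          using x(1) zs(2) by (simp add: mem_cluster)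
        then show ?thesis
          using y by (auto simp: cluster_below_def intro!: bexI[of _ y])
      qed (use x in \<open>auto simp: cluster_below_def intro!: bexI[of _ x]\<close>)
    qed
    then show ?thesis
      using zs(4) by (auto simp: cut_splits_subtree_def)
  qed
qed

lemma tree_path_through:
  assumes "a @ [i] @ z \<in> ternary_words d" "a @ [i'] @ z' \<in> ternary_words d" "i \<noteq> i'"
  obtains ns where "successively (clusters_joined (blowup_edges s d) s) ns" "distinct ns"
    "ns \<noteq> []" "hd ns = a @ [i] @ z" "last ns = a @ [i'] @ z'"
    "set ns \<subseteq> {a @ u | u. u = [] \<or> (\<exists>v. (u = i # v \<and> prefix v z) \<or> (u = i' # v \<and> prefix v z'))}"
proof
  define xs where "xs = map ((@) (a @ [i])) (prefixes z)"
  define ys where "ys = map ((@) a) (prefixes (i' # z'))"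
  let ?joined = "clusters_joined (blowup_edges s d) s"
  have set_xs: "set xs = {a @ i # v | v. prefix v z}"
    by (auto simp: xs_def)
  have set_ys: "set ys = {a @ u | u. u = [] \<or> (\<exists>v. u = i' # v \<and> prefix v z')}"
    by (auto simp: ys_def prefix_Cons)
  have "successively ?joined xs"
    unfolding xs_def by (rule successively_clusters_joined_prefixes) (use assms(1) in simp)
  then have "successively ?joined (rev xs)"
    unfolding successively_rev by (rule successively_mono) (simp add: clusters_joined_sym)
  moreover have "successively ?joined ys"
    unfolding ys_def by (rule successively_clusters_joined_prefixes) (use assms(2) in simp)
  moreover have "?joined (last (rev xs)) (hd ys)"
    using clusters_joined_child[of a i d s] assms(1) ternary_words_prefix[of "a @ [i]" z d]
    by (simp add: xs_def ys_def last_rev hd_map clusters_joined_sym)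
  ultimately show "successively ?joined (rev xs @ ys)"
    by (simp only: successively_append_iff) simp
  have "distinct xs" "distinct ys"
    by (auto simp: xs_def ys_def distinct_map inj_on_def)
  moreover have "set xs \<inter> set ys = {}"
    using assms(3) by (auto simp: set_xs set_ys)
  ultimately show "distinct (rev xs @ ys)"
    by simp
  show "rev xs @ ys \<noteq> []" "hd (rev xs @ ys) = a @ [i] @ z" "last (rev xs @ ys) = a @ [i'] @ z'"
    by (simp_all add: xs_def ys_def hd_append hd_rev last_map)
  show "set (rev xs @ ys) \<subseteq> {a @ u | u. u = [] \<or> (\<exists>v. (u = i # v \<and> prefix v z) \<or> (u = i' # v \<and> prefix v z'))}"
    by (auto simp: set_xs set_ys)
qed

lemma crossing_matching_between_branches:
  assumes "a @ [i] @ z \<in> ternary_words d" "a @ [i'] @ z' \<in> ternary_words d"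
    and "z \<in> ternary_words h" "z' \<in> ternary_words h" "i \<noteq> i'" "i'' \<notin> {i, i'}"
    and "cluster_below s r k (a @ [i] @ z)" "cluster_above s r k (a @ [i'] @ z')"
  obtains M where "s \<le> card M" "crossing_matching (blowup_edges s d) r k
    (subtree_vertices s a (Suc h) - subtree_vertices s (a @ [i'']) h) M"
proof -
  obtain ns where ns: "successively (clusters_joined (blowup_edges s d) s) ns" "distinct ns"
    "ns \<noteq> []" "hd ns = a @ [i] @ z" "last ns = a @ [i'] @ z'"
    "set ns \<subseteq> {a @ u | u. u = [] \<or> (\<exists>v. (u = i # v \<and> prefix v z) \<or> (u = i' # v \<and> prefix v z'))}"
    using tree_path_through[OF assms(1,2,5)] by blast
  obtain M where M: "crossing_matching (blowup_edges s d) r k (cluster s (hd ns) \<union> \<Union>(cluster s ` set (tl ns))) M"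
    "card (cluster s (hd ns)) \<le> card M"
    using crossing_matching_along_path[OF ns(1-3), of k r "cluster s (hd ns)"] ns(4,5) assms(7,8)
    by (auto simp: cluster_below_def cluster_above_def)
  have "i < 3" "i' < 3"
    using assms(1,2) by (auto simp: ternary_words_def)
  have "cluster s w \<subseteq> subtree_vertices s a (Suc h) - subtree_vertices s (a @ [i'']) h"
    if w: "w \<in> set ns" for w
  proof -
    obtain u where u: "w = a @ u" "u = [] \<or> (\<exists>v. (u = i # v \<and> prefix v z) \<or> (u = i' # v \<and> prefix v z'))"
      using ns(6) w by blast
    have "u \<in> ternary_words (Suc h)"
      using u(2) assms(3,4) \<open>i < 3\<close> \<open>i' < 3\<close> by (auto simp: ternary_words_def prefix_def)
    moreover have "u \<noteq> i'' # v" for v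
      using u(2) assms(6) by auto
    ultimately show ?thesis
      using u(1) by (auto simp: cluster_def subtree_vertices_def)
  qed
  then have "cluster s (hd ns) \<union> \<Union>(cluster s ` set (tl ns)) \<subseteq>
      subtree_vertices s a (Suc h) - subtree_vertices s (a @ [i'']) h"
    using ns(3) by (metis (no_types, lifting) UN_subset_iff Un_least hd_in_set list.set_sel(2))
  then show ?thesis
    using that M crossing_matching_mono card_cluster by metis
qed

text \<open>Sort the spanning cuts of the three children as k_A \<le> k_B \<le> k_C. At the middle cut k_B,
  child A still contains a cluster below and child C one above, and the tree path between them
  adds s crossing pairs outside the subtree of B.\<close>
lemma crossing_matching_from_children:
  assumes "length a + Suc h \<le> d" "set a \<subseteq> {..<3}"
    and children: "\<And>i. i < 3 \<Longrightarrow> subtree_spans_cut s r (K i) (a @ [i]) h \<and> n \<le> card (M i) \<and>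
      crossing_matching (blowup_edges s d) r (K i) (subtree_vertices s (a @ [i]) h) (M i)"
  shows "\<exists>k M. subtree_spans_cut s r k a (Suc h) \<and> n + s \<le> card M \<and>
    crossing_matching (blowup_edges s d) r k (subtree_vertices s a (Suc h)) M"
proof -
  obtain iA iB iC where "iA < 3" "iB < 3" "iC < 3" and ord: "distinct [iA, iB, iC]"
    "K iA \<le> K iB" "K iB \<le> K iC"
    using ex_sorted_three by blast
  obtain zA where zA: "zA \<in> ternary_words h" "cluster_below s r (K iB) (a @ [iA] @ zA)"
    using children[OF \<open>iA < 3\<close>] ord(2) by (fastforce simp: subtree_spans_cut_def cluster_below_def)
  obtain zC where zC: "zC \<in> ternary_words h" "cluster_above s r (K iB) (a @ [iC] @ zC)"
    using children[OF \<open>iC < 3\<close>] ord(3) by (fastforce simp: subtree_spans_cut_def cluster_above_def)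
  have "a @ [iA] @ zA \<in> ternary_words d" "a @ [iC] @ zC \<in> ternary_words d"
    using assms(1,2) zA(1) zC(1) \<open>iA < 3\<close> \<open>iC < 3\<close> by (auto simp: ternary_words_def)
  then obtain Mc where Mc: "s \<le> card Mc" "crossing_matching (blowup_edges s d) r (K iB)
      (subtree_vertices s a (Suc h) - subtree_vertices s (a @ [iB]) h) Mc"
    using crossing_matching_between_branches[OF _ _ zA(1) zC(1) _ _ zA(2) zC(2), where i'' = iB] ord(1)
    by auto
  note U = crossing_matching_Un[OF children[OF \<open>iB < 3\<close>, THEN conjunct2, THEN conjunct2] Mc(2) Diff_disjoint]
  have "iA # zA \<in> ternary_words (Suc h)" "iC # zC \<in> ternary_words (Suc h)"
    using zA(1) zC(1) \<open>iA < 3\<close> \<open>iC < 3\<close> by (auto simp: ternary_words_def)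
  then have "subtree_spans_cut s r (K iB) a (Suc h)"
    using zA(2) zC(2) unfolding subtree_spans_cut_def by fastforce
  moreover have "crossing_matching (blowup_edges s d) r (K iB) (subtree_vertices s a (Suc h)) (M iB \<union> Mc)"
    using subtree_vertices_child[OF \<open>iB < 3\<close>, of s a h]
    by (intro crossing_matching_mono[OF U(1)]) auto
  moreover have "n + s \<le> card (M iB \<union> Mc)"
    using U(2) children[OF \<open>iB < 3\<close>] Mc(1) by simp
  ultimately show ?thesis
    by blast
qed

lemma split_subtree_or_crossing_matching:
  assumes "2 \<le> s" "inj_on r (blowup_vertices s d)"
  shows "length a + (h + t) \<le> d \<Longrightarrow> set a \<subseteq> {..<3} \<Longrightarrow>
    (\<exists>a' k. length a' + h \<le> d \<and> set a' \<subseteq> {..<3} \<and> cut_splits_subtree s r k a' h) \<or>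
    (\<exists>k M. subtree_spans_cut s r k a (h + t) \<and> s * t \<le> card M \<and>
       crossing_matching (blowup_edges s d) r k (subtree_vertices s a (h + t)) M)"
proof (induction t arbitrary: a)
  case 0
  then have "length a + h \<le> d"
    by simp
  then obtain k where "subtree_spans_cut s r k a h \<or> cut_splits_subtree s r k a h"
    using subtree_spans_or_splits_cut[OF assms _ "0.prems"(2)] by blast
  then show ?case
    using 0 crossing_matching_empty by fastforce
next
  case (Suc t)
  show ?case
  proof (cases "\<exists>a' k. length a' + h \<le> d \<and> set a' \<subseteq> {..<3} \<and> cut_splits_subtree s r k a' h")
    case False
    have "\<exists>k M. subtree_spans_cut s r k (a @ [i]) (h + t) \<and> s * t \<le> card M \<and>
        crossing_matching (blowup_edges s d) r k (subtree_vertices s (a @ [i]) (h + t)) M" if "i < 3" for i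
      using Suc.IH[of "a @ [i]"] Suc.prems that False by auto
    then obtain K M where "\<And>i. i < 3 \<Longrightarrow> subtree_spans_cut s r (K i) (a @ [i]) (h + t) \<and>
        s * t \<le> card (M i) \<and> crossing_matching (blowup_edges s d) r (K i) (subtree_vertices s (a @ [i]) (h + t)) (M i)"
      by metis
    from crossing_matching_from_children[of a "h + t", OF _ _ this] show ?thesis
      using Suc.prems by (simp add: add.commute)
  qed blast
qed

lemma crossing_matching_of_split_subtree:
  assumes "cut_splits_subtree s r k a h" "length a + h \<le> d" "set a \<subseteq> {..<3}"
  obtains M where "crossing_matching (blowup_edges s d) r k (blowup_vertices s d) M" "card M = 3 ^ h"
proof -
  define Z where "Z = {z. set z \<subseteq> {..<3::nat} \<and> length z = h}"
  have Z: "finite Z" "card Z = 3 ^ h" "Z \<subseteq> ternary_words h"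
    using finite_lists_length_eq[of "{..<3::nat}" h] card_lists_length_eq[of "{..<3::nat}" h]
    by (auto simp: Z_def ternary_words_def)
  have "\<forall>z\<in>Z. \<exists>j1 j2. j1 < s \<and> j2 < s \<and> r (a @ z, j1) < k \<and> k \<le> r (a @ z, j2)"
    using assms(1) Z(3) unfolding cut_splits_subtree_def cluster_below_def cluster_above_def
    by (fastforce simp: cluster_def not_less)
  then obtain J1 J2 where J: "\<And>z. z \<in> Z \<Longrightarrow>
      J1 z < s \<and> J2 z < s \<and> r (a @ z, J1 z) < k \<and> k \<le> r (a @ z, J2 z)"
    by metis
  define M where "M = (\<lambda>z. ((a @ z, J1 z), (a @ z, J2 z))) ` Z"
  have words: "a @ z \<in> ternary_words d" if "z \<in> Z" for z
    using that assms(2,3) by (auto simp: Z_def ternary_words_def)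
  have "crossing_matching (blowup_edges s d) r k (blowup_vertices s d) M"
    unfolding crossing_matching_def
  proof (intro conjI)
    show "finite M" "inj_on fst M" "inj_on snd M"
      using Z(1) by (auto simp: M_def inj_on_def)
    show "\<forall>(x, y)\<in>M. adj (blowup_edges s d) x y \<and> r x < k \<and> k \<le> r y \<and>
        x \<in> blowup_vertices s d \<and> y \<in> blowup_vertices s d"
      using J words by (fastforce simp: M_def blowup_vertices_def intro!: adj_blowup_edges_cluster)
  qed
  moreover have "card M = 3 ^ h"
    unfolding M_def using Z(2) by (subst card_image) (auto simp: inj_on_def)
  ultimately show ?thesis
    using that by blast
qed

text \<open>A subtree of height h split by the cut already yields 3^h crossing pairs, one in each
  of its deepest clusters; otherwise the induction above runs all the way up to the root.\<close>
lemma blowup_crossing_matching: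
  assumes "2 \<le> s" "inj_on r (blowup_vertices s d)" "h \<le> d" "s * (d - h) \<le> 3 ^ h"
  obtains k M where "crossing_matching (blowup_edges s d) r k (blowup_vertices s d) M"
    "s * (d - h) \<le> card M"
proof -
  have "length [] + (h + (d - h)) \<le> d" "set [] \<subseteq> {..<3::nat}"
    using assms(3) by simp_all
  from split_subtree_or_crossing_matching[OF assms(1,2) this] show ?thesis
  proof (elim disjE exE conjE)
    fix a k assume "length a + h \<le> d" "set a \<subseteq> {..<3}" "cut_splits_subtree s r k a h"
    then show ?thesis
      using crossing_matching_of_split_subtree assms(4) that by metis
  next
    fix k M assume "s * (d - h) \<le> card M"
      "crossing_matching (blowup_edges s d) r k (subtree_vertices s [] (h + (d - h))) M"
    moreover have "subtree_vertices s [] (h + (d - h)) = blowup_vertices s d"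
      using assms(3) by (auto simp: subtree_vertices_def blowup_vertices_def)
    ultimately show ?thesis
      using that by simp
  qed
qed

section \<open>The formulas and their fooling sets\<close>

type_synonym atom = "vertex + vertex \<times> vertex"

definition vertex_var :: "vertex \<Rightarrow> nat" where
  "vertex_var v = to_nat (Inl v :: atom)"

definition edge_var :: "vertex \<times> vertex \<Rightarrow> nat" where
  "edge_var e = to_nat (Inr e :: atom)"

lemma vertex_var_eq_iff [simp]: "vertex_var v = vertex_var w \<longleftrightarrow> v = w"
  by (simp add: vertex_var_def)

lemma edge_var_eq_iff [simp]: "edge_var e = edge_var e' \<longleftrightarrow> e = e'"
  by (simp add: edge_var_def)

lemma vertex_var_neq_edge_var [simp]: "vertex_var v \<noteq> edge_var e" "edge_var e \<noteq> vertex_var v"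
  by (simp_all add: vertex_var_def edge_var_def)

definition edge_clause :: "vertex \<times> vertex \<Rightarrow> nat clause" where
  "edge_clause e = {Pos (vertex_var (fst e)), Pos (vertex_var (snd e)), Pos (edge_var e)}"

definition blowup_cnf :: "nat \<Rightarrow> nat \<Rightarrow> nat cnf" where
  "blowup_cnf s d = edge_clause ` blowup_edges s d"

lemma cnf_sat_blowup_cnf:
  "cnf_sat \<sigma> (blowup_cnf s d) \<longleftrightarrow>
     (\<forall>e\<in>blowup_edges s d. \<sigma> (vertex_var (fst e)) \<or> \<sigma> (vertex_var (snd e)) \<or> \<sigma> (edge_var e))"
  by (auto simp: cnf_sat_def blowup_cnf_def edge_clause_def lits_of_def)

lemma cnf_vars_blowup_cnf:
  assumes "2 \<le> s"
  shows "cnf_vars (blowup_cnf s d) = vertex_var ` blowup_vertices s d \<union> edge_var ` blowup_edges s d"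
proof -
  have "lvar ` edge_clause e = {vertex_var (fst e), vertex_var (snd e), edge_var e}" for e
    by (simp add: edge_clause_def)
  moreover have "cnf_vars (blowup_cnf s d) = (\<Union>e\<in>blowup_edges s d. lvar ` edge_clause e)"
    by (auto simp: cnf_vars_def blowup_cnf_def)
  ultimately have "cnf_vars (blowup_cnf s d) =
      (\<Union>e\<in>blowup_edges s d. {vertex_var (fst e), vertex_var (snd e), edge_var e})"
    by simp
  moreover have "\<exists>e\<in>blowup_edges s d. v = fst e \<or> v = snd e" if v: "v \<in> blowup_vertices s d" for v
  proof -
    obtain w j where v: "v = (w, j)" "w \<in> ternary_words d" "j < s"
      using v by (auto simp: blowup_vertices_def)
    then have "((w, 0), (w, 1)) \<in> blowup_edges s d" "j \<noteq> 0 \<Longrightarrow> ((w, 0), (w, j)) \<in> blowup_edges s d"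
      using assms by (auto simp: blowup_edges_def)
    then show ?thesis
      using v by (cases "j = 0") force+
  qed
  ultimately show ?thesis
    using blowup_edges_vertices by fastforce
qed

lemma is_cnf_blowup_cnf: "is_cnf (blowup_cnf s d)"
  by (simp add: is_cnf_def blowup_cnf_def finite_blowup_edges edge_clause_def)

text \<open>For T \<subseteq> M, every pair (x, y) of M gets exactly one true endpoint: x if (x, y) \<notin> T and
  y if (x, y) \<in> T. The edge variables of M are false, all other variables are true.\<close>
definition matching_assignment :: "(vertex \<times> vertex) set \<Rightarrow> (vertex \<times> vertex) set \<Rightarrow> nat \<Rightarrow> bool" where
  "matching_assignment M T n = (case from_nat n :: atom of
      Inl v \<Rightarrow> (\<forall>y. (v, y) \<in> M \<longrightarrow> (v, y) \<notin> T) \<and> (\<forall>x. (x, v) \<in> M \<longrightarrow> (x, v) \<in> T)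
    | Inr e \<Rightarrow> (\<forall>x y. (x, y) \<in> M \<longrightarrow> e \<noteq> (x, y) \<and> e \<noteq> (y, x)))"

lemma matching_assignment_vertex_var [simp]:
  "matching_assignment M T (vertex_var v) \<longleftrightarrow>
     (\<forall>y. (v, y) \<in> M \<longrightarrow> (v, y) \<notin> T) \<and> (\<forall>x. (x, v) \<in> M \<longrightarrow> (x, v) \<in> T)"
  by (simp add: matching_assignment_def vertex_var_def)

lemma matching_assignment_edge_var [simp]:
  "matching_assignment M T (edge_var e) \<longleftrightarrow> (\<forall>x y. (x, y) \<in> M \<longrightarrow> e \<noteq> (x, y) \<and> e \<noteq> (y, x))"
  by (simp add: matching_assignment_def edge_var_def)

lemma matching_assignment_sat:
  assumes "crossing_matching (blowup_edges s d) r k W M"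
  shows "cnf_sat (matching_assignment M T) (blowup_cnf s d)"
  unfolding cnf_sat_blowup_cnf
proof
  fix e assume e: "e \<in> blowup_edges s d"
  show "matching_assignment M T (vertex_var (fst e)) \<or> matching_assignment M T (vertex_var (snd e)) \<or>
      matching_assignment M T (edge_var e)"
  proof (cases "matching_assignment M T (edge_var e)")
    case False
    then obtain x y where xy: "(x, y) \<in> M" "e = (x, y) \<or> e = (y, x)"
      by auto
    note ends = crossing_matching_endpoints[OF assms xy(1)]
    have "if (x, y) \<in> T then matching_assignment M T (vertex_var y) else matching_assignment M T (vertex_var x)"
      using ends by auto
    then show ?thesis
      using xy(2) by (auto split: if_splits)
  qed simp
qed

lemma matching_assignment_fools:
  assumes "crossing_matching (blowup_edges s d) r k (blowup_vertices s d) M"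
    and "(x, y) \<in> T" "(x, y) \<notin> T'" "T \<subseteq> M"
    and "\<forall>v\<in>blowup_vertices s d. vertex_var v \<in> X \<longleftrightarrow> r v < k"
  shows "\<not> cnf_sat (override_on (matching_assignment M T') (matching_assignment M T) X) (blowup_cnf s d)"
proof -
  let ?\<sigma> = "override_on (matching_assignment M T') (matching_assignment M T) X"
  have xy: "(x, y) \<in> M"
    using assms(2,4) by blast
  have "adj (blowup_edges s d) x y" "r x < k" "k \<le> r y" "x \<in> blowup_vertices s d" "y \<in> blowup_vertices s d"
    using crossing_matchingD[OF assms(1) xy] by auto
  then obtain e where e: "e \<in> blowup_edges s d" "e = (x, y) \<or> e = (y, x)"
    unfolding adj_def by blast
  have "vertex_var x \<in> X" "vertex_var y \<notin> X"
    using assms(5) \<open>r x < k\<close> \<open>k \<le> r y\<close> \<open>x \<in> _\<close> \<open>y \<in> _\<close> by auto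
  moreover have "\<not> matching_assignment M T (vertex_var x)" "\<not> matching_assignment M T' (vertex_var y)"
    using assms(2,3) xy by (simp_all only: matching_assignment_vertex_var) blast+
  moreover have "\<not> matching_assignment M T (edge_var e)" "\<not> matching_assignment M T' (edge_var e)"
    using xy e(2) by (simp_all only: matching_assignment_edge_var) blast+
  ultimately have "\<not> ?\<sigma> (vertex_var x)" "\<not> ?\<sigma> (vertex_var y)" "\<not> ?\<sigma> (edge_var e)"
    by (simp_all add: override_on_def)
  then show ?thesis
    unfolding cnf_sat_blowup_cnf using e by (metis fst_conv snd_conv)
qed

lemma inj_on_matching_assignment:
  assumes "crossing_matching E r k W M"
  shows "inj_on (matching_assignment M) (Pow M)"
proof (rule inj_onI, rule ccontr)
  fix T T' assume TT': "T \<in> Pow M" "T' \<in> Pow M" "matching_assignment M T = matching_assignment M T'" "T \<noteq> T'"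
  have differ: "matching_assignment M T \<noteq> matching_assignment M T'"
    if "T \<subseteq> M" "T' \<subseteq> M" "(x, y) \<in> T" "(x, y) \<notin> T'" for T T' x y
  proof -
    have "(x, y) \<in> M"
      using that by blast
    note ends = crossing_matching_endpoints[OF assms this]
    have "\<not> matching_assignment M T (vertex_var x)" "matching_assignment M T' (vertex_var x)"
      using that ends by auto
    then show ?thesis
      by metis
  qed
  obtain x y where "(x, y) \<in> T - T' \<or> (x, y) \<in> T' - T"
    using TT'(4) by auto
  then show False
    using differ TT' by (metis DiffE PowD)
qed

definition list_pos :: "'a list \<Rightarrow> 'a \<Rightarrow> nat" where
  "list_pos xs x = (LEAST i. i < length xs \<and> xs ! i = x)"

lemma list_pos_nth: "distinct xs \<Longrightarrow> i < length xs \<Longrightarrow> list_pos xs (xs ! i) = i"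
  unfolding list_pos_def by (rule Least_equality) (auto simp: nth_eq_iff_index_eq leI)

lemma list_pos_in_set: "x \<in> set xs \<Longrightarrow> list_pos xs x < length xs \<and> xs ! list_pos xs x = x"
  unfolding list_pos_def by (rule LeastI_ex) (simp add: in_set_conv_nth)

definition var_rank :: "nat list \<Rightarrow> nat \<Rightarrow> nat" where
  "var_rank SV x = (if x \<in> set SV then list_pos SV x else length SV + x)"

lemma inj_var_rank: "inj (var_rank SV)"
proof (rule injI)
  fix x y assume eq: "var_rank SV x = var_rank SV y"
  have "x \<in> set SV \<longleftrightarrow> y \<in> set SV"
    using eq list_pos_in_set[of x SV] list_pos_in_set[of y SV] unfolding var_rank_def
    by (metis add_diff_cancel_left' diff_is_0_eq' not_add_less1 not_le)
  then show "x = y"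
    using eq list_pos_in_set[of x SV] list_pos_in_set[of y SV] unfolding var_rank_def
    by (metis add_left_cancel)
qed

lemma var_rank_nth: "distinct SV \<Longrightarrow> i < length SV \<Longrightarrow> var_rank SV (SV ! i) = i"
  by (simp add: var_rank_def list_pos_nth)

lemma down_closed_var_rank: "distinct SV \<Longrightarrow> down_closed SV {x. var_rank SV x < k}"
  unfolding down_closed_def by (simp add: var_rank_nth)

lemma matching_assignments_fooling:
  assumes "crossing_matching (blowup_edges s d) r k (blowup_vertices s d) M"
    and "\<forall>v\<in>blowup_vertices s d. vertex_var v \<in> X \<longleftrightarrow> r v < k"
    and "\<sigma> \<in> matching_assignment M ` Pow M" "\<tau> \<in> matching_assignment M ` Pow M" "\<sigma> \<noteq> \<tau>"
  shows "\<not> cnf_sat (override_on \<tau> \<sigma> X) (blowup_cnf s d) \<or> \<not> cnf_sat (override_on \<sigma> \<tau> X) (blowup_cnf s d)"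
proof -
  obtain T T' where T: "T \<subseteq> M" "T' \<subseteq> M" "\<sigma> = matching_assignment M T"
    "\<tau> = matching_assignment M T'" "T \<noteq> T'"
    using assms(3-5) by auto
  then obtain p where "p \<in> T - T' \<or> p \<in> T' - T"
    by blast
  then show ?thesis
    using matching_assignment_fools[OF assms(1) _ _ _ assms(2)] T by (cases p) blast
qed

lemma blowup_cnf_NSOBDD_size:
  assumes "2 \<le> s" "h \<le> d" "s * (d - h) \<le> 3 ^ h"
    and "is_c_NSOBDD c B" "computes B (blowup_cnf s d)"
  shows "2 ^ (s * (d - h)) \<le> bp_size B ^ (2 * c - 1)"
proof -
  obtain SV where SV: "distinct SV" "paths_sorted c SV B" and "is_nbp B"
    using assms(4) unfolding is_c_NSOBDD_iff by blast
  define r where "r v = var_rank SV (vertex_var v)" for v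
  have "inj r"
    using inj_var_rank[of SV] unfolding r_def inj_def by (metis vertex_var_eq_iff)
  then have "inj_on r (blowup_vertices s d)"
    by (rule inj_on_subset) simp
  then obtain k M where M: "crossing_matching (blowup_edges s d) r k (blowup_vertices s d) M"
    "s * (d - h) \<le> card M"
    using blowup_crossing_matching assms(1-3) by metis
  have "card (matching_assignment M ` Pow M) \<le> bp_size B ^ (2 * c - 1)"
  proof (rule fooling_set_card_le[OF \<open>is_nbp B\<close> SV(2) assms(5) down_closed_var_rank[OF SV(1)]])
    show "\<forall>\<sigma>\<in>matching_assignment M ` Pow M. cnf_sat \<sigma> (blowup_cnf s d)"
      using matching_assignment_sat[OF M(1)] by simp
    show "\<forall>\<sigma>\<in>matching_assignment M ` Pow M. \<forall>\<tau>\<in>matching_assignment M ` Pow M. \<sigma> \<noteq> \<tau> \<longrightarrow>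
        \<not> cnf_sat (override_on \<tau> \<sigma> {x. var_rank SV x < k}) (blowup_cnf s d) \<or>
        \<not> cnf_sat (override_on \<sigma> \<tau> {x. var_rank SV x < k}) (blowup_cnf s d)"
      using matching_assignments_fooling[OF M(1)] by (simp add: r_def)
  qed
  moreover have "card (matching_assignment M ` Pow M) = 2 ^ card M"
    using inj_on_matching_assignment[OF M(1)] M(1) by (simp add: card_image card_Pow crossing_matching_def)
  moreover have "(2::nat) ^ (s * (d - h)) \<le> 2 ^ card M"
    using M(2) by (simp add: power_increasing)
  ultimately show ?thesis
    by linarith
qed

section \<open>Treewidth of the primal graph\<close>

lemma connected_inI_center:
  assumes "c \<in> S" "\<And>t. t \<in> S \<Longrightarrow> (t, c) \<in> {(x, y). {x, y} \<in> TE \<and> x \<in> S \<and> y \<in> S}\<^sup>*"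
  shows "connected_in S TE"
proof -
  let ?R = "{(x, y). {x, y} \<in> TE \<and> x \<in> S \<and> y \<in> S}"
  have "sym ?R"
    by (auto simp: sym_def insert_commute)
  then have "sym (?R\<^sup>*)"
    by (rule sym_rtrancl)
  then show ?thesis
    unfolding connected_in_def using assms by (meson rtrancl_trans symD)
qed

lemma connected_in_parent_map:
  fixes hgt :: "'a \<Rightarrow> nat"
  assumes "rt \<in> T" and parent: "\<And>t. t \<in> T \<Longrightarrow> t \<noteq> rt \<Longrightarrow> par t \<in> T \<and> hgt (par t) < hgt t"
  shows "connected_in T {{t, par t} | t. t \<in> T - {rt}}"
proof (rule connected_inI_center[OF assms(1)])
  fix t assume "t \<in> T"
  then show "(t, rt) \<in> {(x, y). {x, y} \<in> {{t, par t} | t. t \<in> T - {rt}} \<and> x \<in> T \<and> y \<in> T}\<^sup>*"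
  proof (induction t rule: measure_induct_rule[where f = hgt])
    case (less t)
    show ?case
    proof (cases "t = rt")
      case False
      then have "par t \<in> T" "hgt (par t) < hgt t"
        using parent[OF less.prems] by auto
      then show ?thesis
        using less.prems False less.IH by (blast intro: converse_rtrancl_into_rtrancl)
    qed simp
  qed
qed

lemma is_tree_parent_map:
  fixes T :: "nat set" and par hgt :: "nat \<Rightarrow> nat"
  assumes "finite T" "rt \<in> T"
    and parent: "\<And>t. t \<in> T \<Longrightarrow> t \<noteq> rt \<Longrightarrow> par t \<in> T \<and> hgt (par t) < hgt t"
  shows "is_tree T {{t, par t} | t. t \<in> T - {rt}}"
proof -
  define TE where "TE = {{t, par t} | t. t \<in> T - {rt}}"
  have edges: "\<forall>e\<in>TE. \<exists>a b. e = {a, b} \<and> a \<noteq> b \<and> a \<in> T \<and> b \<in> T"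
    using parent by (fastforce simp: TE_def)
  have "inj_on (\<lambda>t. {t, par t}) (T - {rt})"
  proof (rule inj_onI, rule ccontr)
    fix t t' assume a: "t \<in> T - {rt}" "t' \<in> T - {rt}" "{t, par t} = {t', par t'}" "t \<noteq> t'"
    then have "t = par t' \<and> t' = par t"
      by (metis doubleton_eq_iff)
    then show False
      using parent a(1,2) by (metis DiffE insertCI less_asym)
  qed
  moreover have "TE = (\<lambda>t. {t, par t}) ` (T - {rt})"
    unfolding TE_def by blast
  ultimately have "card TE = card (T - {rt})"
    by (simp add: card_image)
  then have "card TE + 1 = card T"
    using assms(1,2) by (simp add: card_Diff_singleton) (metis Suc_pred card_gt_0_iff empty_iff)
  then show ?thesis
    using assms(1,2) edges connected_in_parent_map[OF assms(2) parent] unfolding is_tree_def TE_def by blast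
qed

lemma treewidth_le:
  assumes "tree_decomp V E T TE bag" "\<forall>t\<in>T. finite (bag t) \<and> card (bag t) \<le> k + 1"
  shows "treewidth V E \<le> k"
  unfolding treewidth_def using assms by (intro Least_le) blast

type_synonym decomp_node = "nat list + vertex \<times> vertex"

text \<open>The decomposition follows the ternary tree: the node w carries the clusters of w and of
  its parent, and each edge hangs as a leaf, carrying the three variables of its clause, below
  the node of its second endpoint. Nodes are encoded by to_nat, since tree_decomp works on
  natural numbers.\<close>
definition node_parent :: "decomp_node \<Rightarrow> decomp_node" where
  "node_parent t = (case t of Inl w \<Rightarrow> Inl (butlast w) | Inr e \<Rightarrow> Inl (fst (snd e)))"

definition node_height :: "decomp_node \<Rightarrow> nat" where
  "node_height t = (case t of Inl w \<Rightarrow> 2 * length w | Inr e \<Rightarrow> 2 * length (fst (snd e)) + 1)"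

definition node_bag :: "nat \<Rightarrow> decomp_node \<Rightarrow> nat set" where
  "node_bag s t = (case t of
     Inl w \<Rightarrow> vertex_var ` (cluster s w \<union> cluster s (butlast w))
   | Inr e \<Rightarrow> {vertex_var (fst e), vertex_var (snd e), edge_var e})"

definition decomp_nodes :: "nat \<Rightarrow> nat \<Rightarrow> decomp_node set" where
  "decomp_nodes s d = Inl ` ternary_words d \<union> Inr ` blowup_edges s d"

abbreviation decomp_tree :: "nat \<Rightarrow> nat \<Rightarrow> nat set" where
  "decomp_tree s d \<equiv> to_nat ` decomp_nodes s d"

abbreviation decomp_tree_edges :: "nat \<Rightarrow> nat \<Rightarrow> nat set set" where
  "decomp_tree_edges s d \<equiv>
     {{t, to_nat (node_parent (from_nat t))} | t. t \<in> decomp_tree s d - {to_nat (Inl [] :: decomp_node)}}"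

lemma decomp_nodes_parent: "n \<in> decomp_nodes s d \<Longrightarrow> node_parent n \<in> decomp_nodes s d"
  using blowup_edges_vertices[of _ s d] ternary_words_butlast
  by (auto simp: decomp_nodes_def node_parent_def blowup_vertices_def split: sum.splits)

lemma is_tree_decomp_tree: "is_tree (decomp_tree s d) (decomp_tree_edges s d)"
proof (rule is_tree_parent_map[where hgt = "node_height \<circ> from_nat"])
  show "finite (decomp_tree s d)"
    by (simp add: decomp_nodes_def finite_ternary_words finite_blowup_edges)
  show "to_nat (Inl [] :: decomp_node) \<in> decomp_tree s d"
    by (auto simp: decomp_nodes_def ternary_words_def)
  fix t assume "t \<in> decomp_tree s d" "t \<noteq> to_nat (Inl [] :: decomp_node)"
  then obtain n where n: "n \<in> decomp_nodes s d" "t = to_nat n" "n \<noteq> Inl []"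
    by auto
  have "node_height (node_parent n) < node_height n"
  proof (cases n)
    case (Inl w)
    then have "w \<noteq> []"
      using n(3) by simp
    then show ?thesis
      using Inl by (simp add: node_parent_def node_height_def)
  next
    case (Inr e)
    then show ?thesis
      by (simp add: node_parent_def node_height_def)
  qed
  then show "to_nat (node_parent (from_nat t)) \<in> decomp_tree s d \<and>
      (node_height \<circ> from_nat) (to_nat (node_parent (from_nat t))) < (node_height \<circ> from_nat) t"
    using n(2) decomp_nodes_parent[OF n(1)] by simp
qed

lemma decomp_tree_edgeI:
  "n \<in> decomp_nodes s d \<Longrightarrow> n \<noteq> Inl [] \<Longrightarrow> {to_nat n, to_nat (node_parent n)} \<in> decomp_tree_edges s d"
  by auto

lemma node_bag_vertex_var_cases:
  assumes "n \<in> decomp_nodes s d" "vertex_var (w, j) \<in> node_bag s n"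
  shows "n = Inl w \<or> node_parent n = Inl w \<or>
    (node_parent (node_parent n) = Inl w \<and> vertex_var (w, j) \<in> node_bag s (node_parent n))"
proof (cases n)
  case (Inl w')
  then show ?thesis
    using assms(2) by (auto simp: node_bag_def node_parent_def cluster_def)
next
  case (Inr e)
  then have e: "e \<in> blowup_edges s d" "(w, j) = fst e \<or> (w, j) = snd e"
    using assms by (auto simp: node_bag_def decomp_nodes_def)
  show ?thesis
  proof (cases "fst (snd e) = w")
    case False
    then have "fst e = (w, j)"
      using e(2) by (metis fst_conv)
    moreover obtain i where "fst (snd e) = w @ [i]"
      using blowup_edge_child[OF e(1)] False calculation by (metis fst_conv)
    moreover have "j < s"
      using blowup_edges_vertices[OF e(1)] calculation(1) by (auto simp: blowup_vertices_def)
    ultimately show ?thesis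
      using Inr by (auto simp: node_parent_def node_bag_def cluster_def)
  qed (simp add: Inr node_parent_def)
qed

lemma connected_bags_vertex_var:
  "connected_in {t \<in> decomp_tree s d. vertex_var (w, j) \<in> node_bag s (from_nat t)} (decomp_tree_edges s d)"
  if "(w, j) \<in> blowup_vertices s d"
proof -
  define S where "S = {t \<in> decomp_tree s d. vertex_var (w, j) \<in> node_bag s (from_nat t)}"
  let ?R = "{(x, y). {x, y} \<in> decomp_tree_edges s d \<and> x \<in> S \<and> y \<in> S}"
  define c where "c = to_nat (Inl w :: decomp_node)"
  have "c \<in> S"
    using that by (force simp: S_def c_def decomp_nodes_def node_bag_def cluster_def blowup_vertices_def)
  have up: "(to_nat n, to_nat (node_parent n)) \<in> ?R"
    if "n \<in> decomp_nodes s d" "n \<noteq> Inl []" "vertex_var (w, j) \<in> node_bag s n"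
      "vertex_var (w, j) \<in> node_bag s (node_parent n)" for n
    using that decomp_tree_edgeI decomp_nodes_parent by (auto simp: S_def)
  have "(t, c) \<in> ?R\<^sup>*" if "t \<in> S" for t
  proof -
    obtain n where n: "n \<in> decomp_nodes s d" "t = to_nat n" "vertex_var (w, j) \<in> node_bag s n"
      using \<open>t \<in> S\<close> by (auto simp: S_def)
    consider "n = Inl w" | "n \<noteq> Inl w" "node_parent n = Inl w" |
      "node_parent n \<noteq> Inl w" "node_parent (node_parent n) = Inl w"
      "vertex_var (w, j) \<in> node_bag s (node_parent n)"
      using node_bag_vertex_var_cases[OF n(1,3)] by blast
    then show ?thesis
    proof cases
      case 2
      then have "n \<noteq> Inl []"
        by (auto simp: node_parent_def)
      moreover have "vertex_var (w, j) \<in> node_bag s (node_parent n)"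
        using \<open>c \<in> S\<close> 2(2) by (simp add: S_def c_def)
      ultimately have "(to_nat n, to_nat (node_parent n)) \<in> ?R"
        using up n(1,3) by blast
      then have "(t, c) \<in> ?R"
        using 2(2) by (simp only: n(2) c_def)
      then show ?thesis
        by blast
    next
      case 3
      then have "n \<noteq> Inl []" "node_parent n \<noteq> Inl []"
        by (auto simp: node_parent_def split: sum.splits)
      moreover have "vertex_var (w, j) \<in> node_bag s (node_parent (node_parent n))"
        using \<open>c \<in> S\<close> 3(2) by (simp add: S_def c_def)
      ultimately have "(t, to_nat (node_parent n)) \<in> ?R" "(to_nat (node_parent n), c) \<in> ?R"
        using up n 3(2,3) decomp_nodes_parent[OF n(1)] \<open>c \<in> S\<close> by (auto simp: c_def)
      then show ?thesis
        by (meson converse_rtrancl_into_rtrancl r_into_rtrancl)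
    qed (simp add: n(2) c_def)
  qed
  then show ?thesis
    unfolding S_def[symmetric] using connected_inI_center[OF \<open>c \<in> S\<close>] by blast
qed

lemma connected_bags_edge_var:
  assumes "e \<in> blowup_edges s d"
  shows "connected_in {t \<in> decomp_tree s d. edge_var e \<in> node_bag s (from_nat t)} (decomp_tree_edges s d)"
proof (rule connected_inI_center)
  show "to_nat (Inr e :: decomp_node) \<in> {t \<in> decomp_tree s d. edge_var e \<in> node_bag s (from_nat t)}"
    using assms by (simp add: decomp_nodes_def node_bag_def)
  fix t assume "t \<in> {t \<in> decomp_tree s d. edge_var e \<in> node_bag s (from_nat t)}"
  then have "t = to_nat (Inr e :: decomp_node)"
    by (auto simp: node_bag_def split: sum.splits)
  then show "(t, to_nat (Inr e :: decomp_node)) \<in> {(x, y). {x, y} \<in> decomp_tree_edges s d \<and>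
      x \<in> {t \<in> decomp_tree s d. edge_var e \<in> node_bag s (from_nat t)} \<and>
      y \<in> {t \<in> decomp_tree s d. edge_var e \<in> node_bag s (from_nat t)}}\<^sup>*"
    by simp
qed

lemma tree_decomp_blowup_cnf:
  assumes "2 \<le> s"
  shows "tree_decomp (cnf_vars (blowup_cnf s d)) (primal_edges (blowup_cnf s d))
    (decomp_tree s d) (decomp_tree_edges s d) (node_bag s \<circ> from_nat)"
  unfolding tree_decomp_def cnf_vars_blowup_cnf[OF assms]
proof (intro conjI ballI)
  show "is_tree (decomp_tree s d) (decomp_tree_edges s d)"
    by (rule is_tree_decomp_tree)
  fix t assume "t \<in> decomp_tree s d"
  then show "(node_bag s \<circ> from_nat) t \<subseteq> vertex_var ` blowup_vertices s d \<union> edge_var ` blowup_edges s d"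
    using blowup_edges_vertices[of _ s d] ternary_words_butlast[of _ d]
    by (fastforce simp: decomp_nodes_def node_bag_def cluster_def blowup_vertices_def)
next
  fix v assume "v \<in> vertex_var ` blowup_vertices s d \<union> edge_var ` blowup_edges s d"
  then consider u where "u \<in> blowup_vertices s d" "v = vertex_var u"
    | e where "e \<in> blowup_edges s d" "v = edge_var e"
    by blast
  then show "\<exists>t\<in>decomp_tree s d. v \<in> (node_bag s \<circ> from_nat) t"
  proof cases
    case 1
    then obtain w j where "u = (w, j)" "w \<in> ternary_words d" "j < s"
      by (auto simp: blowup_vertices_def)
    then show ?thesis
      using 1 by (intro bexI[of _ "to_nat (Inl w :: decomp_node)"])
        (auto simp: decomp_nodes_def node_bag_def cluster_def)
  next
    case 2
    then show ?thesis
      by (intro bexI[of _ "to_nat (Inr e :: decomp_node)"]) (auto simp: decomp_nodes_def node_bag_def)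
  qed
  then show "connected_in {t \<in> decomp_tree s d. v \<in> (node_bag s \<circ> from_nat) t} (decomp_tree_edges s d)"
    using \<open>v \<in> _\<close> connected_bags_vertex_var connected_bags_edge_var by auto
next
  fix p assume "p \<in> primal_edges (blowup_cnf s d)"
  then obtain e where "e \<in> blowup_edges s d" "p \<subseteq> lvar ` edge_clause e"
    by (auto simp: primal_edges_def blowup_cnf_def)
  then show "\<exists>t\<in>decomp_tree s d. p \<subseteq> (node_bag s \<circ> from_nat) t"
    by (intro bexI[of _ "to_nat (Inr e :: decomp_node)"])
      (auto simp: decomp_nodes_def node_bag_def edge_clause_def)
qed

lemma primal_treewidth_blowup_cnf:
  assumes "2 \<le> s"
  shows "primal_treewidth (blowup_cnf s d) \<le> 2 * s - 1"
  unfolding primal_treewidth_def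
proof (rule treewidth_le[OF tree_decomp_blowup_cnf[OF assms]], intro ballI conjI)
  fix t assume "t \<in> decomp_tree s d"
  show "finite ((node_bag s \<circ> from_nat) t)"
    by (simp add: node_bag_def finite_cluster split: sum.split)
  have "card (vertex_var ` (cluster s w \<union> cluster s (butlast w))) \<le> 2 * s" for w
    using card_image_le[of "cluster s w \<union> cluster s (butlast w)" vertex_var]
      card_Un_le[of "cluster s w" "cluster s (butlast w)"] by (simp add: finite_cluster card_cluster)
  moreover have "card {vertex_var (fst e), vertex_var (snd e), edge_var e} \<le> 2 * s" for e
    using assms by (simp add: card_insert_if)
  ultimately show "card ((node_bag s \<circ> from_nat) t) \<le> 2 * s - 1 + 1"
    using assms by (auto simp: node_bag_def split: sum.split intro: order_trans)
qed

section \<open>Counting variables and the size bound\<close>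

lemma card_ternary_words_le: "card (ternary_words d) \<le> 3 ^ (d + 1)"
proof -
  have "ternary_words d = {xs. set xs \<subseteq> {..<3} \<and> length xs \<le> d}"
    by (auto simp: ternary_words_def)
  then have "card (ternary_words d) = (\<Sum>i\<le>d. 3 ^ i)"
    using card_lists_length_le[of "{..<3::nat}" d] by simp
  also have "\<dots> \<le> 3 ^ (d + 1)"
    by (induction d) auto
  finally show ?thesis .
qed

lemma card_ternary_words_ge: "d + 1 \<le> card (ternary_words d)"
proof -
  have "(\<lambda>n. replicate n 0) ` {..d} \<subseteq> ternary_words d"
    by (auto simp: ternary_words_def)
  moreover have "card ((\<lambda>n. replicate n (0::nat)) ` {..d}) = d + 1"
    by (subst card_image) (auto simp: inj_on_def)
  ultimately show ?thesis
    by (metis card_mono finite_ternary_words)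
qed

lemma card_blowup_vertices: "card (blowup_vertices s d) = card (ternary_words d) * s"
proof -
  have "blowup_vertices s d = ternary_words d \<times> {..<s}"
    by (auto simp: blowup_vertices_def)
  then show ?thesis
    by (simp add: card_cartesian_product)
qed

lemma card_blowup_edges_le: "card (blowup_edges s d) \<le> 4 * s ^ 2 * card (ternary_words d)"
proof -
  let ?W = "ternary_words d"
  define inner :: "nat list \<times> nat \<times> nat \<Rightarrow> vertex \<times> vertex" where
    "inner = (\<lambda>(w, j, j'). ((w, j), (w, j')))"
  define down :: "nat list \<times> nat \<times> nat \<times> nat \<Rightarrow> vertex \<times> vertex" where
    "down = (\<lambda>(w, i, j, j'). ((w, j), (w @ [i], j')))"
  let ?A = "inner ` (?W \<times> {..<s} \<times> {..<s})" and ?B = "down ` (?W \<times> {..<3} \<times> {..<s} \<times> {..<s})"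
  have "blowup_edges s d \<subseteq> ?A \<union> ?B"
    by (auto simp: blowup_edges_def inner_def down_def image_iff ternary_words_def)
  then have "card (blowup_edges s d) \<le> card (?A \<union> ?B)"
    by (rule card_mono[rotated]) (simp add: finite_ternary_words)
  also have "\<dots> \<le> card ?A + card ?B"
    by (rule card_Un_le)
  also have "\<dots> \<le> card (?W \<times> {..<s} \<times> {..<s}) + card (?W \<times> {..<3::nat} \<times> {..<s} \<times> {..<s})"
    by (intro add_mono card_image_le) (auto simp: finite_ternary_words)
  also have "\<dots> = 4 * s ^ 2 * card ?W"
    by (simp add: card_cartesian_product power2_eq_square)
  finally show ?thesis .
qed

lemma card_cnf_vars_blowup_cnf:
  assumes "2 \<le> s"
  shows "d + 1 \<le> card (cnf_vars (blowup_cnf s d))" "card (cnf_vars (blowup_cnf s d)) \<le> 5 * s ^ 2 * 3 ^ (d + 1)"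
proof -
  let ?V = "vertex_var ` blowup_vertices s d" and ?E = "edge_var ` blowup_edges s d"
  have fin: "finite ?V" "finite ?E"
    by (simp_all add: finite_blowup_vertices finite_blowup_edges)
  have "card ?V = card (ternary_words d) * s"
    by (simp add: card_image inj_on_def card_blowup_vertices)
  then have "d + 1 \<le> card ?V"
    using assms card_ternary_words_ge[of d] by (metis le_trans mult_le_mono2 mult_1_right one_le_numeral)
  also have "card ?V \<le> card (?V \<union> ?E)"
    using fin by (simp add: card_mono)
  finally show "d + 1 \<le> card (cnf_vars (blowup_cnf s d))"
    by (simp add: cnf_vars_blowup_cnf[OF assms])
  have "card (?V \<union> ?E) \<le> card (blowup_vertices s d) + card (blowup_edges s d)"
    using card_Un_le[of ?V ?E] card_image_le[OF finite_blowup_vertices, of vertex_var s d]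
      card_image_le[OF finite_blowup_edges, of edge_var s d] by linarith
  also have "card (blowup_vertices s d) \<le> s ^ 2 * card (ternary_words d)"
    by (simp add: card_blowup_vertices power2_eq_square le_square)
  also note card_blowup_edges_le[of s d]
  also have "s ^ 2 * card (ternary_words d) + 4 * s ^ 2 * card (ternary_words d) \<le> 5 * s ^ 2 * 3 ^ (d + 1)"
    using card_ternary_words_le[of d] by simp
  finally show "card (cnf_vars (blowup_cnf s d)) \<le> 5 * s ^ 2 * 3 ^ (d + 1)"
    by (simp add: cnf_vars_blowup_cnf[OF assms])
qed

lemma nine_square_le_three_pow: "6 \<le> h \<Longrightarrow> 9 * h ^ 2 \<le> (3::nat) ^ h"
proof (induction h rule: dec_induct)
  case (step h)
  have "6 * h \<le> h * h"
    using step.hyps(1) by simp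
  moreover have "9 * (Suc h) ^ 2 = 9 * (h * h) + 18 * h + 9" "3 * (9 * h ^ 2) = 27 * (h * h)"
    by (simp_all add: power2_eq_square algebra_simps)
  ultimately have "9 * (Suc h) ^ 2 \<le> 3 * (9 * h ^ 2)"
    using step.hyps(1) by linarith
  also have "\<dots> \<le> 3 * 3 ^ h"
    using step.IH by simp
  finally show ?case
    by simp
qed simp

lemma linear_le_three_pow: "2 \<le> s \<Longrightarrow> s + 4 \<le> h \<Longrightarrow> s * (4 * h + 5) \<le> (3::nat) ^ h"
  using mult_le_mono[of s h "4 * h + 5" "9 * h"] nine_square_le_three_pow[of h]
  by (simp add: power2_eq_square)

lemma three_pow_le_four_pow: "(3::nat) ^ (5 * h + 6) \<le> 4 ^ (4 * h + 5)"
proof -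
  have "(3::nat) ^ (5 * h + 6) = 243 ^ h * 729"
    by (simp add: power_add power_mult)
  also have "\<dots> \<le> 256 ^ h * 1024"
    by (intro mult_le_mono power_mono) auto
  also have "\<dots> = 4 ^ (4 * h + 5)"
    by (simp add: power_add power_mult)
  finally show ?thesis .
qed

lemma powr_le_if_pow_le:
  fixes x a N :: real
  assumes "0 \<le> x" "x \<le> a" "a ^ p \<le> N ^ q" "0 < q" "0 \<le> N"
  shows "x powr (real p / real q) \<le> N"
proof (cases "a = 0")
  case False
  then have "0 < a"
    using assms(1,2) by simp
  have "x powr (real p / real q) \<le> a powr (real p / real q)"
    using assms(1,2) by (simp add: powr_mono2)
  also have "\<dots> = (a powr real p) powr (1 / real q)"
    by (simp add: powr_powr)
  also have "\<dots> \<le> (N powr real q) powr (1 / real q)"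
    using assms(3-5) \<open>0 < a\<close> by (simp add: powr_mono2 powr_realpow powr_realpow')
  also have "\<dots> = N"
    using assms(4,5) by (simp add: powr_powr powr_one)
  finally show ?thesis .
qed (use assms in simp)

lemma half_succ_bounds:
  fixes p :: nat
  assumes "3 \<le> p"
  shows "2 \<le> (p + 1) div 2" "p \<le> 2 * ((p + 1) div 2)" "2 * ((p + 1) div 2) - 1 \<le> p"
    "5 * ((p + 1) div 2) ^ 2 \<le> 3 * p ^ 2"
proof -
  show "2 \<le> (p + 1) div 2" "p \<le> 2 * ((p + 1) div 2)" "2 * ((p + 1) div 2) - 1 \<le> p"
    using assms by auto
  have "(2 * ((p + 1) div 2)) ^ 2 \<le> (p + 1) ^ 2"
    by (rule power_mono) auto
  then have "4 * ((p + 1) div 2) ^ 2 \<le> p ^ 2 + 2 * p + 1"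
    by (simp add: power2_eq_square algebra_simps)
  moreover have "21 * p \<le> 7 * p ^ 2"
    using assms by (simp add: power2_eq_square)
  ultimately show "5 * ((p + 1) div 2) ^ 2 \<le> 3 * p ^ 2"
    using assms by linarith
qed

lemma three_pow_le_size_pow:
  fixes N :: nat
  assumes "p \<le> 2 * s" "2 ^ (s * (4 * h + 5)) \<le> N ^ n"
  shows "3 ^ ((5 * h + 6) * p) \<le> N ^ (4 * n)"
proof -
  have "(3::nat) ^ ((5 * h + 6) * p) \<le> 4 ^ ((4 * h + 5) * p)"
    using three_pow_le_four_pow[of h] by (simp add: power_mult power_mono)
  also have "\<dots> = 2 ^ (2 * ((4 * h + 5) * p))"
    by (simp add: power_mult)
  also have "\<dots> \<le> 2 ^ (4 * (s * (4 * h + 5)))"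
    using mult_le_mono2[OF assms(1), of "2 * (4 * h + 5)"] by (intro power_increasing) (simp_all add: algebra_simps)
  also have "\<dots> = (2 ^ (s * (4 * h + 5))) ^ 4"
    by (simp add: power_mult[symmetric] mult.commute)
  also have "\<dots> \<le> (N ^ n) ^ 4"
    using assms(2) by (rule power_mono) simp
  finally show ?thesis
    by (simp add: power_mult[symmetric] mult.commute)
qed

text \<open>The i-th formula for treewidth p: s = \<lceil>p/2\<rceil>, and d = 5h + 5 with h = i + s + 4, so that
  s (d - h) \<le> 3^h. Then m \<le> 5 s^2 3^(5h+6) \<le> 3 p^2 3^(5h+6), while every c-NSOBDD of size N
  has 3^((5h+6) p) \<le> N^(4(2c-1)).\<close>
definition hard_cnf :: "nat \<Rightarrow> nat \<Rightarrow> nat cnf" where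
  "hard_cnf p i = blowup_cnf ((p + 1) div 2) (5 * (i + (p + 1) div 2 + 4) + 5)"

lemma hard_cnf_treewidth:
  assumes "3 \<le> p"
  shows "is_cnf (hard_cnf p i)" "primal_treewidth (hard_cnf p i) \<le> p"
  using primal_treewidth_blowup_cnf half_succ_bounds[OF assms]
  by (auto simp: hard_cnf_def is_cnf_blowup_cnf intro: order_trans)

lemma hard_cnf_vars_unbounded:
  assumes "3 \<le> p"
  shows "filterlim (\<lambda>i. card (cnf_vars (hard_cnf p i))) at_top sequentially"
proof (intro filterlim_at_top_mono[OF filterlim_ident] always_eventually allI)
  fix i
  have "5 * (i + (p + 1) div 2 + 4) + 5 + 1 \<le> card (cnf_vars (hard_cnf p i))"
    unfolding hard_cnf_def by (rule card_cnf_vars_blowup_cnf(1)[OF half_succ_bounds(1)[OF assms]])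
  then show "i \<le> card (cnf_vars (hard_cnf p i))"
    by (rule order_trans[rotated]) simp
qed

lemma hard_cnf_NSOBDD_size:
  assumes "3 \<le> p" "1 \<le> c" "is_c_NSOBDD c B" "computes B (hard_cnf p i)"
  shows "(real (card (cnf_vars (hard_cnf p i))) / (3 * real p ^ 2)) powr (real p / (8 * real c - 4))
      \<le> real (bp_size B)"
proof -
  define s where "s = (p + 1) div 2"
  define h where "h = i + s + 4"
  define m where "m = card (cnf_vars (hard_cnf p i))"
  define N where "N = bp_size B"
  note s = half_succ_bounds[OF assms(1), folded s_def]
  have F: "hard_cnf p i = blowup_cnf s (5 * h + 5)"
    by (simp add: hard_cnf_def s_def h_def)
  have "s + 4 \<le> h"
    by (simp add: h_def)
  then have "h \<le> 5 * h + 5" "s * (5 * h + 5 - h) \<le> 3 ^ h"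
    using linear_le_three_pow[OF s(1)] by simp_all
  from blowup_cnf_NSOBDD_size[OF s(1) this assms(3)]
  have "2 ^ (s * (4 * h + 5)) \<le> N ^ (2 * c - 1)"
    using assms(4) by (simp add: F N_def)
  then have "real (3 ^ ((5 * h + 6) * p)) \<le> real (N ^ (4 * (2 * c - 1)))"
    using three_pow_le_size_pow s(2) of_nat_le_iff by blast
  then have pow: "(3 ^ (5 * h + 6)) ^ p \<le> real N ^ (4 * (2 * c - 1))"
    by (simp add: power_mult)
  have "m \<le> 5 * s ^ 2 * 3 ^ (5 * h + 6)"
    using card_cnf_vars_blowup_cnf(2)[OF s(1), of "5 * h + 5"] by (simp add: F m_def add.commute)
  also have "\<dots> \<le> 3 * p ^ 2 * 3 ^ (5 * h + 6)"
    using s(4) by simp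
  finally have "real m \<le> real (3 * p ^ 2 * 3 ^ (5 * h + 6))"
    by (simp only: of_nat_le_iff)
  then have "real m / (3 * real p ^ 2) \<le> 3 ^ (5 * h + 6)"
    using assms(1) by (simp add: pos_divide_le_eq mult.commute)
  from powr_le_if_pow_le[OF _ this pow]
  have "(real m / (3 * real p ^ 2)) powr (real p / real (4 * (2 * c - 1))) \<le> real N"
    using assms(2) by simp
  moreover have "real (4 * (2 * c - 1)) = 8 * real c - 4"
    using assms(2) by (simp add: of_nat_diff)
  ultimately show ?thesis
    by (simp only: m_def N_def)
qed

theorem theorem2:
  fixes c :: nat
  assumes "c \<ge> 1"
  shows "\<forall>p::nat. p \<ge> 3 \<longrightarrow>
    (\<exists>F :: nat \<Rightarrow> nat cnf.
       (\<forall>i. is_cnf (F i) \<and> primal_treewidth (F i) \<le> p) \<and>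
       filterlim (\<lambda>i. card (cnf_vars (F i))) at_top sequentially \<and>
       (\<forall>i. \<forall>B :: nat bp. is_c_NSOBDD c B \<and> computes B (F i) \<longrightarrow>
          real (bp_size B) \<ge>
            (real (card (cnf_vars (F i))) / (3 * real p ^ 2)) powr
              (real p / (8 * real c - 4))))"
proof (intro allI impI, intro exI conjI)
  fix p :: nat assume p: "3 \<le> p"
  show "\<forall>i. is_cnf (hard_cnf p i) \<and> primal_treewidth (hard_cnf p i) \<le> p"
    using hard_cnf_treewidth[OF p] by blast
  show "filterlim (\<lambda>i. card (cnf_vars (hard_cnf p i))) at_top sequentially"
    by (rule hard_cnf_vars_unbounded[OF p])
  show "\<forall>i B. is_c_NSOBDD c B \<and> computes B (hard_cnf p i) \<longrightarrow> real (bp_size B) \<ge>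
      (real (card (cnf_vars (hard_cnf p i))) / (3 * real p ^ 2)) powr (real p / (8 * real c - 4))"
    using hard_cnf_NSOBDD_size[OF p assms] by blast
qed

end
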